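(* For an R$^*$-algebra $A$ the following are equivalent: (i) there is no strictly increasing infinite sequence $p_1<p_2<\cdots$ of projections in $A$ (equivalently no infinite strictly ascending chain of principal right ideals of $A$); (ii) there is no infinite family of mutually orthogonal nonzero projections in $A$; (iii) $A$ is finite-dimensional.
   Context: An R$^*$-algebra is a (not necessarily closed, not necessarily unital) $^*$-subalgebra $A$ of $B(H)$, $H$ a complex Hilbert space, such that every self-adjoint element of $A$ has finite spectrum. Projections are $p=p^2=p^*$ in $A$, ordered by $p\le q$ iff $pq=p$. *)

theory Defs
  imports "HOL-Analysis.Analysis"
begin

class complex_vector = real_vector +
  fixes scaleC :: "complex \<Rightarrow> 'a \<Rightarrow> 'a"
  assumes scaleC_add_right: "scaleC a (x + y) = scaleC a x + scaleC a y"
    and scaleC_add_left: "scaleC (a + b) x = scaleC a x + scaleC b x"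
    and scaleC_scaleC: "scaleC a (scaleC b x) = scaleC (a * b) x"
    and scaleC_one: "scaleC 1 x = x"
    and scaleR_scaleC: "scaleR r x = scaleC (complex_of_real r) x"

class complex_inner = complex_vector + real_normed_vector +
  fixes cinner :: "'a \<Rightarrow> 'a \<Rightarrow> complex"
  assumes cinner_commute: "cinner x y = cnj (cinner y x)"
    and cinner_add_left: "cinner (x + y) z = cinner x z + cinner y z"
    and cinner_scaleC_left: "cinner (scaleC r x) y = cnj r * cinner x y"
    and cinner_real: "Im (cinner x x) = 0"
    and cinner_ge_zero: "0 \<le> Re (cinner x x)"
    and cinner_eq_zero_iff: "cinner x x = 0 \<longleftrightarrow> x = 0"
    and norm_eq_sqrt_cinner: "norm x = sqrt (Re (cinner x x))"

text \<open>A complex Hilbert space is a type of sort {complex_inner, complete_space}.\<close>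

definition bounded_op :: "('h::complex_inner \<Rightarrow> 'h) \<Rightarrow> bool" where
  "bounded_op T \<longleftrightarrow>
     (\<forall>x y. T (x + y) = T x + T y) \<and>
     (\<forall>c x. T (scaleC c x) = scaleC c (T x)) \<and>
     (\<exists>K. \<forall>x. norm (T x) \<le> K * norm x)"

definition adj :: "('h::complex_inner \<Rightarrow> 'h) \<Rightarrow> ('h \<Rightarrow> 'h)" where
  "adj T = (THE S. \<forall>x y. cinner (T x) y = cinner x (S y))"

definition op_spectrum :: "('h::complex_inner \<Rightarrow> 'h) \<Rightarrow> complex set" where
  "op_spectrum T = {z. \<not> (\<exists>S. bounded_op S \<and>
        S \<circ> (\<lambda>x. scaleC z x - T x) = id \<and> (\<lambda>x. scaleC z x - T x) \<circ> S = id)}"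

definition star_subalgebra :: "('h::complex_inner \<Rightarrow> 'h) set \<Rightarrow> bool" where
  "star_subalgebra A \<longleftrightarrow>
     (\<forall>T\<in>A. bounded_op T) \<and>
     (\<lambda>x. 0) \<in> A \<and>
     (\<forall>S\<in>A. \<forall>T\<in>A. (\<lambda>x. S x + T x) \<in> A \<and> S \<circ> T \<in> A) \<and>
     (\<forall>c. \<forall>T\<in>A. (\<lambda>x. scaleC c (T x)) \<in> A) \<and>
     (\<forall>T\<in>A. adj T \<in> A)"

definition R_star_algebra :: "('h::complex_inner \<Rightarrow> 'h) set \<Rightarrow> bool" where
  "R_star_algebra A \<longleftrightarrow> star_subalgebra A \<and>
     (\<forall>T\<in>A. adj T = T \<longrightarrow> finite (op_spectrum T))"

definition is_projection :: "('h::complex_inner \<Rightarrow> 'h) set \<Rightarrow> ('h \<Rightarrow> 'h) \<Rightarrow> bool" where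
  "is_projection A p \<longleftrightarrow> p \<in> A \<and> p \<circ> p = p \<and> adj p = p"

definition proj_le :: "('h \<Rightarrow> 'h) \<Rightarrow> ('h \<Rightarrow> 'h) \<Rightarrow> bool" where
  "proj_le p q \<longleftrightarrow> p \<circ> q = p"

definition proj_less :: "('h \<Rightarrow> 'h) \<Rightarrow> ('h \<Rightarrow> 'h) \<Rightarrow> bool" where
  "proj_less p q \<longleftrightarrow> proj_le p q \<and> p \<noteq> q"

definition finite_dim_alg :: "('h::complex_inner \<Rightarrow> 'h) set \<Rightarrow> bool" where
  "finite_dim_alg A \<longleftrightarrow> (\<exists>B. finite B \<and> B \<subseteq> A \<and>
     (\<forall>T\<in>A. \<exists>c. T = (\<lambda>x. \<Sum>b\<in>B. scaleC (c b) (b x))))"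

end

(*
  (i) <-> (ii): the differences p (n + 1) - p n of a strictly increasing chain of projections
  are mutually orthogonal nonzero projections; conversely, the partial sums of an infinite
  orthogonal family form a strictly increasing chain.

  (iii) -> (ii): mutually orthogonal nonzero projections are linearly independent.

  (ii) -> (iii): a nonzero self-adjoint h in A has finite spectrum containing a nonzero real
  point (+- ||h||), so a Lagrange polynomial L with L 0 = 0 that is 1 at this point and vanishes
  on the rest of the spectrum yields a nonzero projection L h in hA. Without infinite orthogonal
  families every nonzero projection dominates a minimal one, and some finite family E of
  mutually orthogonal minimal projections is maximal. For e = sum E, a nonzero corner
  (1 - e) a (1 - e) of a self-adjoint a in A would contain a minimal projection orthogonal to E.
  Hence A = eAe is the sum of the corners iAj (i, j in E), each at most one-dimensional since
  iAi = C i for minimal i.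

  The functions in A are treated as elements of the ring 'a bop of bounded operators, where
  adjoints exist by the Riesz representation theorem.
*)

theory Submission
  imports Defs "HOL-Computational_Algebra.Fundamental_Theorem_Algebra"
begin

section \<open>Complex inner product spaces\<close>

lemma scaleC_zero_left [simp]: "scaleC 0 (x::'a::complex_vector) = 0"
proof -
  have "scaleC 0 x = scaleC 0 x + scaleC 0 x" by (metis add_0 scaleC_add_left)
  then show ?thesis by simp
qed

lemma scaleC_zero_right [simp]: "scaleC a (0::'a::complex_vector) = 0"
proof -
  have "scaleC a (0::'a) = scaleC a 0 + scaleC a 0" by (metis add_0 scaleC_add_right)
  then show ?thesis by simp
qed

lemma scaleC_minus_left: "scaleC (- a) (x::'a::complex_vector) = - scaleC a x"
  by (metis add.left_inverse eq_neg_iff_add_eq_0 scaleC_add_left scaleC_zero_left)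

lemma scaleC_minus1_left: "scaleC (- 1) (x::'a::complex_vector) = - x"
  by (simp add: scaleC_minus_left scaleC_one)

lemma cinner_zero_left [simp]: "cinner 0 (y::'a::complex_inner) = 0"
  by (metis add_0 add_cancel_right_left cinner_add_left)

lemma cinner_zero_right [simp]: "cinner (y::'a::complex_inner) 0 = 0"
  by (metis cinner_commute cinner_zero_left complex_cnj_zero)

lemma cinner_add_right: "cinner (x::'a::complex_inner) (y + z) = cinner x y + cinner x z"
  by (metis cinner_add_left cinner_commute complex_cnj_add)

lemma cinner_scaleC_right: "cinner (x::'a::complex_inner) (scaleC r y) = r * cinner x y"
  by (metis cinner_commute cinner_scaleC_left complex_cnj_cnj complex_cnj_mult)

lemma cinner_minus_left: "cinner (- x::'a::complex_inner) y = - cinner x y"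
  by (metis add.left_inverse add_eq_0_iff cinner_add_left cinner_zero_left)

lemma cinner_minus_right: "cinner (x::'a::complex_inner) (- y) = - cinner x y"
  by (metis cinner_commute cinner_minus_left complex_cnj_minus)

lemma cinner_diff_left: "cinner (x - z::'a::complex_inner) y = cinner x y - cinner z y"
  using cinner_add_left[of x "- z" y] by (simp add: cinner_minus_left)

lemma cinner_diff_right: "cinner (x::'a::complex_inner) (y - z) = cinner x y - cinner x z"
  using cinner_add_right[of x y "- z"] by (simp add: cinner_minus_right)

lemma cinner_self: "cinner (x::'a::complex_inner) x = complex_of_real ((norm x)\<^sup>2)"
  using norm_eq_sqrt_cinner[of x] cinner_ge_zero[of x] cinner_real[of x] by (simp add: complex_eq_iff)

lemma Re_cinner_self: "Re (cinner (x::'a::complex_inner) x) = (norm x)\<^sup>2"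
  by (simp add: cinner_self)

lemma cmod_cinner_commute: "cmod (cinner (x::'a::complex_inner) y) = cmod (cinner y x)"
  by (metis cinner_commute complex_mod_cnj)

lemma Re_cinner_commute: "Re (cinner (x::'a::complex_inner) y) = Re (cinner y x)"
  by (metis cinner_commute cnj.simps(1))

lemma cinner_ext: "(\<And>x. cinner x a = cinner x (b::'a::complex_inner)) \<Longrightarrow> a = b"
  by (metis cinner_diff_right cinner_eq_zero_iff eq_iff_diff_eq_0)

lemma norm_scaleC: "norm (scaleC c (x::'a::complex_inner)) = cmod c * norm x"
proof -
  have "cinner (scaleC c x) (scaleC c x) = (c * cnj c) * cinner x x"
    by (simp only: cinner_scaleC_left cinner_scaleC_right mult_ac)
  also have "\<dots> = complex_of_real ((cmod c * norm x)\<^sup>2)"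
    by (simp only: complex_norm_square cinner_self power_mult_distrib of_real_mult)
  finally have "(norm (scaleC c x))\<^sup>2 = (cmod c * norm x)\<^sup>2"
    by (metis Re_cinner_self Re_complex_of_real)
  then show ?thesis by (simp add: power2_eq_iff_nonneg)
qed

lemma norm_add_square:
  "(norm (x + y::'a::complex_inner))\<^sup>2 = (norm x)\<^sup>2 + (norm y)\<^sup>2 + 2 * Re (cinner x y)"
proof -
  have "cinner (x + y) (x + y) = cinner x x + cinner y y + (cinner x y + cinner y x)"
    by (simp add: cinner_add_left cinner_add_right algebra_simps)
  then show ?thesis
    using Re_cinner_commute[of y x] by (simp add: Re_cinner_self[symmetric])
qed

lemma norm_diff_square:
  "(norm (x - y::'a::complex_inner))\<^sup>2 = (norm x)\<^sup>2 + (norm y)\<^sup>2 - 2 * Re (cinner x y)"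
  using norm_add_square[of x "- y"] by (simp add: cinner_minus_right)

lemma parallelogram_law:
  "(norm (x + y::'a::complex_inner))\<^sup>2 + (norm (x - y))\<^sup>2 = 2 * (norm x)\<^sup>2 + 2 * (norm y)\<^sup>2"
  using norm_add_square[of x y] norm_diff_square[of x y] by simp

lemma cinner_Cauchy_Schwarz: "cmod (cinner (x::'a::complex_inner) y) \<le> norm x * norm y"
proof (cases "y = 0")
  case True
  then show ?thesis by simp
next
  case False
  then have ny: "norm y > 0" by simp
  define t where "t = cinner y x / cinner y y"
  define z where "z = x - scaleC t y"
  have yy: "cinner y y = complex_of_real ((norm y)\<^sup>2)" by (rule cinner_self)
  have yz: "cinner y z = 0"
    using ny by (simp add: z_def t_def yy cinner_diff_right cinner_scaleC_right)
  then have zy: "cinner z y = 0" by (metis cinner_commute complex_cnj_zero)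
  have x: "x = z + scaleC t y" by (simp add: z_def)
  have "cinner x x = cinner z z + (t * cnj t) * cinner y y"
    unfolding x using yz zy
    by (simp add: cinner_add_left cinner_add_right cinner_scaleC_left cinner_scaleC_right)
  also have "\<dots> = complex_of_real ((norm z)\<^sup>2 + (cmod t)\<^sup>2 * (norm y)\<^sup>2)"
    by (simp only: complex_norm_square cinner_self yy of_real_mult of_real_add)
  finally have "(norm x)\<^sup>2 = (norm z)\<^sup>2 + (cmod t)\<^sup>2 * (norm y)\<^sup>2"
    by (metis Re_cinner_self Re_complex_of_real)
  moreover have "cmod t = cmod (cinner x y) / (norm y)\<^sup>2"
    by (simp add: t_def yy norm_divide norm_power cmod_cinner_commute)
  ultimately have "((cmod (cinner x y) / (norm y)\<^sup>2) * norm y)\<^sup>2 \<le> (norm x)\<^sup>2"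
    unfolding power_mult_distrib by (metis le_add_same_cancel2 zero_le_power2)
  then have "cmod (cinner x y) / (norm y)\<^sup>2 * norm y \<le> norm x"
    by (rule power2_le_imp_le) simp
  then show ?thesis
    using ny by (simp add: field_simps power2_eq_square)
qed

lemma cinner_eq_0_if_norm_minimal:
  fixes u x :: "'a::complex_inner"
  assumes minimal: "\<And>t. norm u \<le> norm (u + scaleC t x)"
  shows "cinner u x = 0"
proof (rule ccontr)
  define c where "c = cinner u x"
  assume "cinner u x \<noteq> 0"
  then have c: "(cmod c)\<^sup>2 > 0" by (simp add: c_def)
  define s :: real where "s = 1 / ((norm x)\<^sup>2 + 1)"
  have s: "s > 0" "s * (norm x)\<^sup>2 < 2"
    unfolding s_def by (auto simp: field_simps add_pos_nonneg)
  define t where "t = - complex_of_real s * cnj c"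
  have "(norm u)\<^sup>2 \<le> (norm (u + scaleC t x))\<^sup>2" using minimal[of t] by (simp add: power_mono)
  also have "\<dots> = (norm u)\<^sup>2 + (cmod t)\<^sup>2 * (norm x)\<^sup>2 + 2 * Re (t * c)"
    by (simp add: norm_add_square norm_scaleC cinner_scaleC_right c_def power_mult_distrib)
  also have "Re (t * c) = - s * (cmod c)\<^sup>2"
  proof -
    have "t * c = - (complex_of_real s * (c * cnj c))" by (simp add: t_def mult_ac)
    also have "\<dots> = - complex_of_real (s * (cmod c)\<^sup>2)"
      by (simp only: complex_norm_square[symmetric] of_real_mult)
    finally show ?thesis by simp
  qed
  also have "(cmod t)\<^sup>2 = s\<^sup>2 * (cmod c)\<^sup>2"
    by (simp add: t_def norm_mult power_mult_distrib abs_of_pos s)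
  finally have "0 \<le> (cmod c)\<^sup>2 * s * (s * (norm x)\<^sup>2 - 2)"
    by (simp add: algebra_simps power2_eq_square)
  moreover have "(cmod c)\<^sup>2 * s * (s * (norm x)\<^sup>2 - 2) < 0"
    using c s by (simp add: mult_pos_neg)
  ultimately show False by simp
qed

section \<open>The Riesz representation theorem\<close>

lemma onorm_almost_attained:
  fixes f :: "'a::real_normed_vector \<Rightarrow> 'b::real_normed_vector"
  assumes f: "bounded_linear f" and d: "0 < d" "d \<le> onorm f"
  shows "\<exists>x. norm x = 1 \<and> onorm f - d < norm (f x)"
proof -
  interpret f: bounded_linear f by fact
  have "bdd_above (range (\<lambda>x. norm (f x) / norm x))"
    by (rule bdd_aboveI2) (rule le_onorm[OF f])
  moreover have "onorm f - d < (SUP x. norm (f x) / norm x)"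
    using d by (simp add: onorm_def)
  ultimately obtain x where x: "onorm f - d < norm (f x) / norm x"
    by (auto simp: less_cSUP_iff)
  with d have "x \<noteq> 0" by auto
  show ?thesis
  proof (intro exI conjI)
    show "norm (scaleR (inverse (norm x)) x) = 1"
      using \<open>x \<noteq> 0\<close> by simp
    show "onorm f - d < norm (f (scaleR (inverse (norm x)) x))"
      using x by (simp add: f.scale divide_inverse_commute)
  qed
qed

lemma bounded_linear_functional:
  fixes f :: "'a::complex_inner \<Rightarrow> complex"
  assumes add: "\<And>x y. f (x + y) = f x + f y"
    and hom: "\<And>c x. f (scaleC c x) = c * f x"
    and bound: "\<And>x. cmod (f x) \<le> K * norm x"
  shows "bounded_linear f"
  by (rule bounded_linear_intro[where K = K])
    (simp_all add: add hom scaleR_scaleC scaleR_conv_of_real bound mult.commute)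

lemma functional_Re_almost_attained:
  fixes f :: "'a::complex_inner \<Rightarrow> complex"
  assumes hom: "\<And>c x. f (scaleC c x) = c * f x" and f: "bounded_linear f"
    and d: "0 < d" "d \<le> onorm f"
  shows "\<exists>x. norm x = 1 \<and> onorm f - d < Re (f x)"
proof -
  obtain x where x: "norm x = 1" "onorm f - d < cmod (f x)"
    using onorm_almost_attained[OF f d] by auto
  with d have fx: "f x \<noteq> 0" by auto
  define v where "v = scaleC (cnj (f x) / cmod (f x)) x"
  have "norm v = 1"
    using x(1) fx by (simp add: v_def norm_scaleC norm_divide)
  moreover have "f v = f x * cnj (f x) / cmod (f x)"
    by (simp add: v_def hom mult.commute)
  then have "f v = cmod (f x)"
    using fx by (simp add: complex_norm_square[symmetric] power2_eq_square)
  ultimately show ?thesis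
    using x(2) by auto
qed

lemma Cauchy_if_almost_maximizing:
  fixes f :: "'a::complex_inner \<Rightarrow> complex"
  assumes add: "\<And>x y. f (x + y) = f x + f y"
    and bound: "\<And>x. cmod (f x) \<le> N * norm x" and N: "0 < N"
    and xs: "\<And>n. norm (xs n) \<le> 1" and near: "\<And>n. N - \<delta> n < Re (f (xs n))"
    and \<delta>: "\<delta> \<longlonglongrightarrow> 0"
  shows "Cauchy xs"
proof (rule CauchyI)
  fix e :: real
  assume e: "0 < e"
  with N have "0 < e\<^sup>2 * N / 8" by simp
  then obtain M where M: "\<forall>n\<ge>M. norm (\<delta> n - 0) < e\<^sup>2 * N / 8"
    using LIMSEQ_D[OF \<delta>] by blast
  show "\<exists>M. \<forall>m\<ge>M. \<forall>n\<ge>M. norm (xs m - xs n) < e"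
  proof (intro exI allI impI)
    fix m n
    assume "m \<ge> M" "n \<ge> M"
    then have "\<delta> m < e\<^sup>2 * N / 8" "\<delta> n < e\<^sup>2 * N / 8"
      using M by (auto simp: abs_less_iff)
    then have \<delta>mn: "\<delta> m + \<delta> n < e\<^sup>2 * N / 4" by simp
    define s where "s = xs m + xs n"
    have "2 * N - (\<delta> m + \<delta> n) < Re (f s)"
      using near[of m] near[of n] by (simp add: s_def add)
    also have "\<dots> \<le> N * norm s"
      by (rule order_trans[OF complex_Re_le_cmod bound])
    finally have "N * (2 - norm s) < N * (e\<^sup>2 / 4)"
      using \<delta>mn by (simp add: algebra_simps)
    then have gap: "2 - norm s < e\<^sup>2 / 4"
      using N by simp
    have "norm s \<le> 2"
      using norm_triangle_ineq[of "xs m" "xs n"] xs[of m] xs[of n] by (simp add: s_def)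
    have "(norm (xs m))\<^sup>2 \<le> 1" "(norm (xs n))\<^sup>2 \<le> 1"
      using xs[of m] xs[of n] by (simp_all add: power_le_one)
    then have "(norm (xs m - xs n))\<^sup>2 \<le> (2 - norm s) * (2 + norm s)"
      using parallelogram_law[of "xs m" "xs n"] by (simp add: s_def power2_eq_square algebra_simps)
    also have "\<dots> \<le> (2 - norm s) * 4"
      using \<open>norm s \<le> 2\<close> by (intro mult_left_mono) auto
    also have "\<dots> < e\<^sup>2"
      using gap by simp
    finally show "norm (xs m - xs n) < e"
      using e by (simp add: power_less_imp_less_base)
  qed
qed

lemma bounded_functional_maximizer:
  fixes f :: "'a::{complex_inner,complete_space} \<Rightarrow> complex"
  assumes add: "\<And>x y. f (x + y) = f x + f y"
    and hom: "\<And>c x. f (scaleC c x) = c * f x"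
    and f: "bounded_linear f" and N: "0 < onorm f"
  shows "\<exists>u. norm u \<le> 1 \<and> Re (f u) = onorm f"
proof -
  define \<delta> where "\<delta> n = onorm f * inverse (real (Suc n))" for n
  have "\<exists>x. norm x = 1 \<and> onorm f - \<delta> n < Re (f x)" for n
  proof (rule functional_Re_almost_attained[OF hom f])
    show "0 < \<delta> n" "\<delta> n \<le> onorm f"
      using N by (auto simp: \<delta>_def inverse_le_1_iff intro: mult_left_le)
  qed
  then obtain xs where xs: "\<And>n. norm (xs n) = 1" and near: "\<And>n. onorm f - \<delta> n < Re (f (xs n))"
    by metis
  have \<delta>: "\<delta> \<longlonglongrightarrow> 0"
    unfolding \<delta>_def by (rule tendsto_mult_right_zero[OF LIMSEQ_inverse_real_of_nat])
  have "Cauchy xs"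
    by (rule Cauchy_if_almost_maximizing[OF add onorm[OF f] N _ near \<delta>]) (simp add: xs)
  then obtain u where u: "xs \<longlonglongrightarrow> u"
    using Cauchy_convergent_iff convergent_def by blast
  have "norm u \<le> 1"
    using LIMSEQ_le_const2[OF tendsto_norm[OF u]] xs by simp
  moreover have "onorm f \<le> Re (f u)"
  proof (rule LIMSEQ_le)
    show "(\<lambda>n. onorm f - \<delta> n) \<longlonglongrightarrow> onorm f"
      using tendsto_diff[OF tendsto_const \<delta>] by simp
    show "(\<lambda>n. Re (f (xs n))) \<longlonglongrightarrow> Re (f u)"
      by (rule tendsto_Re[OF bounded_linear.tendsto[OF f u]])
  qed (use near less_imp_le in blast)
  moreover have "Re (f u) \<le> onorm f"
  proof -
    have "Re (f u) \<le> onorm f * norm u"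
      by (rule order_trans[OF complex_Re_le_cmod onorm[OF f]])
    also have "\<dots> \<le> onorm f"
      using \<open>norm u \<le> 1\<close> N by (simp add: mult_left_le)
    finally show ?thesis .
  qed
  ultimately show ?thesis by auto
qed

lemma maximizer_orthogonal_to_kernel:
  fixes f :: "'a::complex_inner \<Rightarrow> complex"
  assumes add: "\<And>x y. f (x + y) = f x + f y"
    and hom: "\<And>c x. f (scaleC c x) = c * f x"
    and bound: "\<And>x. cmod (f x) \<le> N * norm x" and N: "0 < N"
    and u: "norm u \<le> 1" "Re (f u) = N" and x: "f x = 0"
  shows "cinner u x = 0"
proof (rule cinner_eq_0_if_norm_minimal)
  fix t
  have "N = Re (f (u + scaleC t x))"
    using u(2) x by (simp add: add hom)
  also have "\<dots> \<le> N * norm (u + scaleC t x)"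
    by (rule order_trans[OF complex_Re_le_cmod bound])
  finally show "norm u \<le> norm (u + scaleC t x)"
    using N u(1) by simp
qed

lemma functional_eq_cinner_if_kernel_orthogonal:
  fixes f :: "'a::complex_inner \<Rightarrow> complex"
  assumes add: "\<And>x y. f (x + y) = f x + f y"
    and hom: "\<And>c x. f (scaleC c x) = c * f x"
    and fu: "f u \<noteq> 0" and orth: "\<And>x. f x = 0 \<Longrightarrow> cinner u x = 0"
  shows "f x = cinner (scaleC (cnj (f u / cinner u u)) u) x"
proof -
  have "f 0 = 0"
    using hom[of 0 0] by simp
  with fu have "cinner u u \<noteq> 0"
    by (auto simp: cinner_eq_zero_iff)
  define y where "y = x - scaleC (f x / f u) u"
  have "f x = f y + f (scaleC (f x / f u) u)"
    using add[of y "scaleC (f x / f u) u"] by (simp add: y_def)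
  then have "f y = 0"
    using fu by (simp add: hom)
  then have "cinner u y = 0" by (rule orth)
  then have "cinner u x = (f x / f u) * cinner u u"
    by (simp add: y_def cinner_diff_right cinner_scaleC_right)
  then show ?thesis
    using fu \<open>cinner u u \<noteq> 0\<close> by (simp add: cinner_scaleC_left field_simps)
qed

theorem riesz_representation:
  fixes f :: "'a::{complex_inner,complete_space} \<Rightarrow> complex"
  assumes add: "\<And>x y. f (x + y) = f x + f y"
    and hom: "\<And>c x. f (scaleC c x) = c * f x"
    and bound: "\<And>x. cmod (f x) \<le> K * norm x"
  shows "\<exists>w. \<forall>x. f x = cinner w x"
proof (cases "\<forall>x. f x = 0")
  case True
  then show ?thesis by (intro exI[of _ 0]) simp
next
  case False
  have f: "bounded_linear f"
    by (rule bounded_linear_functional[OF add hom bound])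
  with False have N: "0 < onorm f"
    by (simp add: onorm_pos_lt)
  obtain u where u: "norm u \<le> 1" "Re (f u) = onorm f"
    using bounded_functional_maximizer[OF add hom f N] by blast
  with N have "f u \<noteq> 0" by auto
  moreover have "cinner u x = 0" if "f x = 0" for x
    using maximizer_orthogonal_to_kernel[OF add hom onorm[OF f] N u that] .
  ultimately show ?thesis
    using functional_eq_cinner_if_kernel_orthogonal[OF add hom] by blast
qed

section \<open>Bounded operators and their adjoints\<close>

lemma bounded_op_apply_add: "bounded_op T \<Longrightarrow> T (x + y) = T x + T y"
  unfolding bounded_op_def by blast

lemma bounded_op_apply_scaleC: "bounded_op T \<Longrightarrow> T (scaleC c x) = scaleC c (T x)"
  unfolding bounded_op_def by blast

lemma bounded_op_nonneg_bound:
  assumes "bounded_op T"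
  shows "\<exists>K\<ge>0. \<forall>x. norm (T x) \<le> K * norm x"
proof -
  obtain K where K: "\<And>x. norm (T x) \<le> K * norm x"
    using assms unfolding bounded_op_def by blast
  have "norm (T x) \<le> max K 0 * norm x" for x
    using K[of x] mult_right_mono[of K "max K 0" "norm x"] by simp
  then show ?thesis by (intro exI[of _ "max K 0"]) simp
qed

lemma bounded_op_bounded_linear:
  assumes T: "bounded_op T"
  shows "bounded_linear T"
proof -
  obtain K where "\<And>x. norm (T x) \<le> K * norm x"
    using T unfolding bounded_op_def by blast
  then show ?thesis
    by (intro bounded_linear_intro[where K = K])
      (simp_all add: bounded_op_apply_add[OF T] bounded_op_apply_scaleC[OF T] scaleR_scaleC
        mult.commute)
qed

lemma bounded_op_zero: "bounded_op (\<lambda>x. 0)"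
  unfolding bounded_op_def by (auto intro: exI[of _ 0])

lemma bounded_op_ident: "bounded_op (\<lambda>x. x)"
  unfolding bounded_op_def by (auto intro: exI[of _ 1])

lemma bounded_op_scaleC: "bounded_op (\<lambda>x. scaleC c x)"
  unfolding bounded_op_def
  by (auto simp: scaleC_add_right scaleC_scaleC mult.commute norm_scaleC intro!: exI[of _ "cmod c"])

lemma bounded_op_add:
  assumes S: "bounded_op S" and T: "bounded_op T"
  shows "bounded_op (\<lambda>x. S x + T x)"
proof -
  obtain K L where K: "\<And>x. norm (S x) \<le> K * norm x" and L: "\<And>x. norm (T x) \<le> L * norm x"
    using bounded_op_nonneg_bound[OF S] bounded_op_nonneg_bound[OF T] by blast
  show ?thesis
    unfolding bounded_op_def
  proof (intro conjI allI exI)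
    show "S (x + y) + T (x + y) = S x + T x + (S y + T y)" for x y
      by (simp add: bounded_op_apply_add[OF S] bounded_op_apply_add[OF T] algebra_simps)
    show "S (scaleC c x) + T (scaleC c x) = scaleC c (S x + T x)" for c x
      by (simp add: bounded_op_apply_scaleC[OF S] bounded_op_apply_scaleC[OF T] scaleC_add_right)
    show "norm (S x + T x) \<le> (K + L) * norm x" for x
      using order_trans[OF norm_triangle_ineq add_mono[OF K L]] by (simp add: distrib_right)
  qed
qed

lemma bounded_op_compose:
  assumes S: "bounded_op S" and T: "bounded_op T"
  shows "bounded_op (\<lambda>x. S (T x))"
proof -
  obtain K L where K: "K \<ge> 0" "\<And>x. norm (S x) \<le> K * norm x" and L: "\<And>x. norm (T x) \<le> L * norm x"
    using bounded_op_nonneg_bound[OF S] bounded_op_nonneg_bound[OF T] by blast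
  have "norm (S (T x)) \<le> (K * L) * norm x" for x
    using K(2)[of "T x"] mult_left_mono[OF L[of x] K(1)] by (simp add: mult.assoc)
  then show ?thesis
    using S T unfolding bounded_op_def by auto
qed

lemma bounded_op_uminus: "bounded_op T \<Longrightarrow> bounded_op (\<lambda>x. - T x)"
  using bounded_op_compose[OF bounded_op_scaleC[of "- 1"]] by (simp add: scaleC_minus1_left)

lemma bounded_op_diff: "bounded_op S \<Longrightarrow> bounded_op T \<Longrightarrow> bounded_op (\<lambda>x. S x - T x)"
  using bounded_op_add[of S "\<lambda>x. - T x"] bounded_op_uminus[of T] by simp

lemma adj_unique:
  assumes "\<And>x y. cinner (T x) y = cinner x (S y)"
  shows "adj T = S"
  unfolding adj_def
proof (rule the_equality)
  fix S'
  assume "\<forall>x y. cinner (T x) y = cinner x (S' y)"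
  with assms show "S' = S"
    by (metis cinner_ext ext)
qed (use assms in blast)

lemma adj_exists:
  fixes T :: "'a::{complex_inner,complete_space} \<Rightarrow> 'a"
  assumes T: "bounded_op T"
  shows "\<exists>S. \<forall>x y. cinner (T x) y = cinner x (S y)"
proof -
  obtain K where K: "K \<ge> 0" "\<And>x. norm (T x) \<le> K * norm x"
    using bounded_op_nonneg_bound[OF T] by blast
  have "\<exists>w. \<forall>x. cinner y (T x) = cinner w x" for y
  proof (rule riesz_representation)
    show "cmod (cinner y (T x)) \<le> (norm y * K) * norm x" for x
      using order_trans[OF cinner_Cauchy_Schwarz mult_left_mono[OF K(2) norm_ge_zero]]
      by (simp add: mult.assoc)
  qed (simp_all add: bounded_op_apply_add[OF T] bounded_op_apply_scaleC[OF T]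
      cinner_add_right cinner_scaleC_right)
  then obtain S where "\<And>y x. cinner y (T x) = cinner (S y) x"
    by metis
  then show ?thesis
    by (metis cinner_commute)
qed

lemma cinner_adj:
  fixes T :: "'a::{complex_inner,complete_space} \<Rightarrow> 'a"
  assumes "bounded_op T"
  shows "cinner (T x) y = cinner x (adj T y)"
  using adj_exists[OF assms] adj_unique by metis

lemma bounded_op_adj:
  fixes T :: "'a::{complex_inner,complete_space} \<Rightarrow> 'a"
  assumes T: "bounded_op T"
  shows "bounded_op (adj T)"
proof -
  note adj = cinner_adj[OF T]
  obtain K where K: "K \<ge> 0" "\<And>x. norm (T x) \<le> K * norm x"
    using bounded_op_nonneg_bound[OF T] by blast
  have "norm (adj T y) \<le> K * norm y" for y
  proof -
    have "(norm (adj T y))\<^sup>2 = Re (cinner (T (adj T y)) y)"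
      by (simp add: adj Re_cinner_self)
    also have "\<dots> \<le> norm (T (adj T y)) * norm y"
      by (rule order_trans[OF complex_Re_le_cmod cinner_Cauchy_Schwarz])
    also have "\<dots> \<le> norm (adj T y) * (K * norm y)"
      using mult_right_mono[OF K(2) norm_ge_zero] by (simp add: mult_ac)
    finally have "norm (adj T y) * norm (adj T y) \<le> norm (adj T y) * (K * norm y)"
      by (simp add: power2_eq_square)
    then show ?thesis
      using K(1) by (cases "adj T y = 0") auto
  qed
  moreover have "adj T (x + y) = adj T x + adj T y" "adj T (scaleC c x) = scaleC c (adj T x)" for c x y
    by (rule cinner_ext, simp add: adj[symmetric] cinner_add_right cinner_scaleC_right)+
  ultimately show ?thesis
    unfolding bounded_op_def by blast
qed

section \<open>The ring of bounded operators\<close>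

typedef (overloaded) 'a bop = "{T :: 'a::complex_inner \<Rightarrow> 'a. bounded_op T}"
  morphisms app Abs_bop
  using bounded_op_zero by blast

setup_lifting type_definition_bop

instantiation bop :: (complex_inner) "{ring, monoid_mult}"
begin

lift_definition zero_bop :: "'a bop" is "\<lambda>x. 0" by (rule bounded_op_zero)
lift_definition one_bop :: "'a bop" is "\<lambda>x. x" by (rule bounded_op_ident)
lift_definition plus_bop :: "'a bop \<Rightarrow> 'a bop \<Rightarrow> 'a bop" is "\<lambda>S T x. S x + T x"
  by (rule bounded_op_add)
lift_definition minus_bop :: "'a bop \<Rightarrow> 'a bop \<Rightarrow> 'a bop" is "\<lambda>S T x. S x - T x"
  by (rule bounded_op_diff)
lift_definition uminus_bop :: "'a bop \<Rightarrow> 'a bop" is "\<lambda>T x. - T x"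
  by (rule bounded_op_uminus)
lift_definition times_bop :: "'a bop \<Rightarrow> 'a bop \<Rightarrow> 'a bop" is "\<lambda>S T x. S (T x)"
  by (rule bounded_op_compose)

instance
proof
  fix a b c :: "'a bop"
  show "a + b + c = a + (b + c)" by transfer (simp add: add.assoc)
  show "a + b = b + a" by transfer (simp add: add.commute)
  show "0 + a = a" by transfer simp
  show "- a + a = 0" by transfer simp
  show "a - b = a + - b" by transfer simp
  show "a * b * c = a * (b * c)" by transfer simp
  show "(a + b) * c = a * c + b * c" by transfer simp
  show "a * (b + c) = a * b + a * c" by transfer (simp add: bounded_op_apply_add)
  show "1 * a = a" by transfer simp
  show "a * 1 = a" by transfer simp
qed

end

lemma app_zero [simp]: "app 0 x = 0" by transfer simp
lemma app_one [simp]: "app 1 x = x" by transfer simp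
lemma app_plus [simp]: "app (S + T) x = app S x + app T x" by transfer simp
lemma app_minus [simp]: "app (S - T) x = app S x - app T x" by transfer simp
lemma app_uminus [simp]: "app (- T) x = - app T x" by transfer simp
lemma app_times [simp]: "app (S * T) x = app S (app T x)" by transfer simp

lemma bounded_op_app: "bounded_op (app T)"
  using app by blast

lemma app_scaleC: "app T (scaleC c x) = scaleC c (app T x)"
  by (rule bounded_op_apply_scaleC[OF bounded_op_app])

lemma bop_eqI: "(\<And>x. app S x = app T x) \<Longrightarrow> S = T"
  by (metis app_inject ext)

lemma app_sum: "app (sum f S) x = (\<Sum>s\<in>S. app (f s) x)"
  by (induct S rule: infinite_finite_induct) simp_all

lift_definition scal :: "complex \<Rightarrow> 'a::complex_inner bop" is "\<lambda>c x. scaleC c x"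
  by (rule bounded_op_scaleC)

lemma app_scal [simp]: "app (scal c) x = scaleC c x"
  by transfer simp

lemma scal_add: "scal (a + b) = scal a + scal b"
  by transfer (simp add: fun_eq_iff scaleC_add_left)

lemma scal_mult: "scal (a * b) = scal a * scal b"
  by transfer (simp add: fun_eq_iff scaleC_scaleC)

lemma scal_one [simp]: "scal 1 = 1"
  by transfer (simp add: fun_eq_iff scaleC_one)

lemma scal_zero [simp]: "scal 0 = 0"
  by transfer (simp add: fun_eq_iff)

lemma scal_minus: "scal (- a) = - scal a"
  by transfer (simp add: fun_eq_iff scaleC_minus_left)

lemma scal_commute: "scal c * T = T * scal c"
  by (rule bop_eqI) (simp add: app_scaleC)

lemma mult_scal_left_commute: "T * (scal c * X) = scal c * (T * X)"
  by (metis mult.assoc scal_commute)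

lemma scal_mult_scal: "scal a * (scal b * T) = scal (a * b) * T"
  by (simp add: scal_mult mult.assoc)

lemma scal_mult_eq_0_iff: "c \<noteq> 0 \<Longrightarrow> scal c * T = 0 \<longleftrightarrow> T = 0"
proof
  assume "c \<noteq> 0" "scal c * T = 0"
  have "T = scal (inverse c) * (scal c * T)"
    using \<open>c \<noteq> 0\<close> by (simp add: scal_mult_scal)
  with \<open>scal c * T = 0\<close> show "T = 0" by simp
qed simp

lift_definition star :: "'a::{complex_inner,complete_space} bop \<Rightarrow> 'a bop" is adj
  by (rule bounded_op_adj)

lemma cinner_star: "cinner (app T x) y = cinner x (app (star T) y)"
  by transfer (rule cinner_adj)

lemma star_unique: "(\<And>x y. cinner (app T x) y = cinner x (app S y)) \<Longrightarrow> star T = S"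
  by (rule bop_eqI, rule cinner_ext) (metis cinner_star)

lemma star_star [simp]: "star (star T) = T"
proof (rule star_unique)
  show "cinner (app (star T) x) y = cinner x (app T y)" for x y
    by (metis cinner_star cinner_commute)
qed

lemma star_add: "star (S + T) = star S + star T"
  by (rule star_unique) (simp add: cinner_add_left cinner_add_right cinner_star)

lemma star_mult: "star (S * T) = star T * star S"
  by (rule star_unique) (simp add: cinner_star)

lemma star_scal: "star (scal c) = scal (cnj c)"
  by (rule star_unique) (simp add: cinner_scaleC_left cinner_scaleC_right)

lemma star_zero [simp]: "star 0 = 0"
  by (rule star_unique) simp

lemma star_diff: "star (S - T) = star S - star T"
  by (rule star_unique) (simp add: cinner_diff_left cinner_diff_right cinner_star)

lemma star_one [simp]: "star 1 = 1"
  by (rule star_unique) simp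

lemma star_scal_mult: "star (scal c * T) = scal (cnj c) * star T"
  by (simp add: star_mult star_scal scal_commute)

definition re_part :: "'a::{complex_inner,complete_space} bop \<Rightarrow> 'a bop"
  where "re_part y = scal (1 / 2) * (y + star y)"

definition im_part :: "'a::{complex_inner,complete_space} bop \<Rightarrow> 'a bop"
  where "im_part y = scal (- \<i> / 2) * (y - star y)"

lemma star_re_part: "star (re_part y) = re_part y"
  by (simp add: re_part_def star_scal_mult star_add add.commute)

lemma star_im_part: "star (im_part y) = im_part y"
proof -
  have "star (im_part y) = scal (\<i> / 2) * (star y - y)"
    by (simp add: im_part_def star_scal_mult star_diff)
  then show ?thesis
    by (simp add: im_part_def scal_minus algebra_simps)
qed

lemma re_im_part_decomposition: "y = re_part y + scal \<i> * im_part y"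
proof -
  have "y + y = scal 2 * y"
    by (simp add: scal_add[of 1 1, simplified] distrib_right)
  then have "scal (1 / 2) * (y + y) = y"
    by (simp add: scal_mult_scal)
  then show ?thesis
    by (simp add: re_part_def im_part_def scal_mult_scal algebra_simps)
qed

lemma star_sum: "star (sum f S) = (\<Sum>x\<in>S. star (f x))"
  by (induct S rule: infinite_finite_induct) (simp_all add: star_add)

lemma star_mult_self_eq_0:
  assumes "star X * X = (0::'a::{complex_inner,complete_space} bop)"
  shows "X = 0"
proof (rule bop_eqI)
  fix x
  have "cinner (app X x) (app X x) = cinner x (app (star X * X) x)"
    by (simp add: cinner_star)
  then show "app X x = app 0 x"
    using assms by (simp add: cinner_eq_zero_iff)
qed

section \<open>Polynomials in an operator and the spectrum\<close>

definition peval :: "complex poly \<Rightarrow> 'a::complex_inner bop \<Rightarrow> 'a bop" where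
  "peval p X = fold_coeffs (\<lambda>a r. scal a + X * r) p 0"

lemma peval_0 [simp]: "peval 0 X = 0"
  by (simp add: peval_def)

lemma peval_pCons [simp]: "peval (pCons a p) X = scal a + X * peval p X"
proof (cases "p = 0 \<and> a = 0")
  case True
  then show ?thesis by (simp add: peval_def)
next
  case False
  then have "fold_coeffs (\<lambda>a r. scal a + X * r) (pCons a p)
      = (\<lambda>r. scal a + X * r) \<circ> fold_coeffs (\<lambda>a r. scal a + X * r) p"
    by (cases "a = 0") auto
  then show ?thesis by (simp add: peval_def)
qed

lemma peval_add: "peval (p + q) X = peval p X + peval q X"
proof (induct p arbitrary: q)
  case (pCons a p)
  obtain b q' where q: "q = pCons b q'" by (cases q) auto
  show ?case using pCons(2)[of q'] by (simp add: q scal_add algebra_simps)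
qed simp

lemma peval_smult: "peval (smult c p) X = scal c * peval p X"
proof (induct p)
  case (pCons a p)
  have "scal c * (X * peval p X) = X * (scal c * peval p X)"
    by (metis mult.assoc scal_commute)
  with pCons show ?case
    using scal_commute[of a "scal c"] by (simp add: scal_mult algebra_simps)
qed simp

lemma peval_diff: "peval (p - q) X = peval p X - peval q X"
proof -
  have "peval (- q) X = - peval q X"
    using peval_smult[of "- 1" q X] by (simp add: scal_minus)
  then show ?thesis
    using peval_add[of p "- q" X] by simp
qed

lemma peval_mult: "peval (p * q) X = peval p X * peval q X"
proof (induct p)
  case (pCons a p)
  have "pCons a p * q = smult a q + pCons 0 (p * q)"
    by (simp add: mult_pCons_left)
  with pCons show ?case
    by (simp add: peval_add peval_smult algebra_simps)
qed simp

lemma peval_commute: "peval p X * peval q X = peval q X * peval p X"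
  by (metis peval_mult mult.commute)

lemma peval_linear: "peval [:- l, 1:] X = X - scal l"
  by (simp add: scal_minus)

lemma peval_star: "star X = X \<Longrightarrow> star (peval p X) = peval (map_poly cnj p) X"
proof (induct p)
  case (pCons a p)
  have "X * peval p X = peval p X * X"
    using peval_commute[of "[:0, 1:]" X p] by simp
  with pCons show ?case
    by (simp add: map_poly_pCons star_add star_mult star_scal)
qed simp

lemma peval_eigen: "X * F = scal l * F \<Longrightarrow> peval p X * F = scal (poly p l) * F"
proof (induct p)
  case (pCons a p)
  have "peval (pCons a p) X * F = scal a * F + X * (scal (poly p l) * F)"
    using pCons by (simp add: algebra_simps)
  also have "X * (scal (poly p l) * F) = scal (poly p l) * (X * F)"
    by (rule mult_scal_left_commute)
  also have "\<dots> = scal (l * poly p l) * F"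
    using pCons(3) by (simp add: scal_mult_scal mult.commute)
  finally show ?case
    by (simp add: scal_add algebra_simps)
qed simp

definition is_invertible :: "'a::monoid_mult \<Rightarrow> bool" where
  "is_invertible X \<longleftrightarrow> (\<exists>S. S * X = 1 \<and> X * S = 1)"

lemma is_invertible_one: "is_invertible 1"
  by (auto simp: is_invertible_def)

lemma is_invertible_mult: "is_invertible X \<Longrightarrow> is_invertible Y \<Longrightarrow> is_invertible (X * Y)"
  unfolding is_invertible_def by (metis mult.assoc mult_1_left)

lemma is_invertible_uminus: "is_invertible (X :: 'a::{ring, monoid_mult}) \<Longrightarrow> is_invertible (- X)"
  unfolding is_invertible_def by (metis minus_mult_minus)

lemma is_invertible_left_factor:
  assumes "is_invertible (X * Y)" "X * Y = Y * X"
  shows "is_invertible X"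
proof -
  obtain S where "S * (X * Y) = 1" "X * Y * S = 1"
    using assms(1) unfolding is_invertible_def by blast
  then have "(S * Y) * X = 1" "X * (Y * S) = 1"
    using assms(2) by (simp_all add: mult.assoc[symmetric])
  then show ?thesis
    unfolding is_invertible_def by (metis mult.assoc mult_1_left mult_1_right)
qed

definition spectrum :: "'a::complex_inner bop \<Rightarrow> complex set" where
  "spectrum X = {z. \<not> is_invertible (scal z - X)}"

lemma is_invertible_scal: "c \<noteq> 0 \<Longrightarrow> is_invertible (scal c)"
  unfolding is_invertible_def by (intro exI[of _ "scal (inverse c)"]) (simp add: scal_mult[symmetric])

lemma is_invertible_peval:
  "p \<noteq> 0 \<Longrightarrow> (\<And>l. l \<in> spectrum X \<Longrightarrow> poly p l \<noteq> 0) \<Longrightarrow> is_invertible (peval p X)"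
proof (induct "degree p" arbitrary: p rule: less_induct)
  case less
  show ?case
  proof (cases "degree p = 0")
    case True
    then obtain c where "p = [:c:]" "c \<noteq> 0"
      using less(2) by (metis degree_eq_zeroE pCons_0_0)
    then show ?thesis by (simp add: is_invertible_scal)
  next
    case False
    then obtain w where "poly p w = 0"
      using fundamental_theorem_of_algebra constant_degree by metis
    then obtain q where pq: "p = [:- w, 1:] * q"
      using poly_eq_0_iff_dvd by (metis dvdE)
    with less(2) have "q \<noteq> 0" by auto
    then have "degree ([:- w, 1:] * q) = degree [:- w, 1:] + degree q"
      by (intro degree_mult_eq) auto
    then have "degree q < degree p"
      by (simp only: pq) simp
    moreover have "poly q l \<noteq> 0" if "l \<in> spectrum X" for l
      using less(3)[OF that] pq by auto
    ultimately have "is_invertible (peval q X)"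
      using less(1) \<open>q \<noteq> 0\<close> by blast
    moreover have "w \<notin> spectrum X"
      using less(3) \<open>poly p w = 0\<close> by blast
    then have "is_invertible (X - scal w)"
      using is_invertible_uminus[of "scal w - X"] by (simp add: spectrum_def)
    ultimately show ?thesis
      unfolding pq peval_mult peval_linear by (rule is_invertible_mult[rotated])
  qed
qed

lemma poly_in_spectrum_peval:
  assumes "l \<in> spectrum X"
  shows "poly p l \<in> spectrum (peval p X)"
proof (rule ccontr)
  assume "poly p l \<notin> spectrum (peval p X)"
  have "poly (p - [:poly p l:]) l = 0" by simp
  then obtain q where q: "p - [:poly p l:] = [:- l, 1:] * q"
    using poly_eq_0_iff_dvd by (metis dvdE)
  have "scal (poly p l) - peval p X = - peval (p - [:poly p l:]) X"
    by (simp add: peval_diff)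
  also have "\<dots> = (scal l - X) * peval q X"
    unfolding q peval_mult peval_linear by (simp add: algebra_simps)
  finally have "is_invertible ((scal l - X) * peval q X)"
    using \<open>poly p l \<notin> _\<close> by (simp add: spectrum_def)
  moreover have "(scal l - X) * peval q X = peval q X * (scal l - X)"
    using peval_commute[of "[:0, 1:]" X q] scal_commute[of l "peval q X"]
    by (simp add: algebra_simps)
  ultimately have "is_invertible (scal l - X)"
    by (rule is_invertible_left_factor)
  with assms show False
    by (simp add: spectrum_def)
qed

section \<open>Spectral projections of self-adjoint operators\<close>

definition projection :: "'a::{complex_inner,complete_space} bop \<Rightarrow> bool" where
  "projection p \<longleftrightarrow> p * p = p \<and> star p = p"

lemma not_invertible_if_approx_kernel:
  fixes T :: "'a::complex_inner bop"
  assumes approx: "\<And>\<epsilon>. 0 < \<epsilon> \<Longrightarrow> \<exists>x. norm x = 1 \<and> norm (app T x) < \<epsilon>"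
  shows "\<not> is_invertible T"
proof
  assume "is_invertible T"
  then obtain R where R: "R * T = 1"
    unfolding is_invertible_def by blast
  obtain K where K: "K \<ge> 0" "\<And>x. norm (app R x) \<le> K * norm x"
    using bounded_op_nonneg_bound[OF bounded_op_app] by blast
  obtain x where x: "norm x = 1" "norm (app T x) < 1 / (K + 1)"
    using approx[of "1 / (K + 1)"] K(1) by auto
  have "1 = norm (app R (app T x))"
    using R x(1) by (metis app_one app_times)
  also have "\<dots> \<le> K * norm (app T x)"
    by (rule K(2))
  also have "\<dots> \<le> K * (1 / (K + 1))"
    using x(2) K(1) by (intro mult_left_mono) auto
  also have "\<dots> < 1"
    using K(1) by (simp add: field_simps)
  finally show False by simp
qed

lemma self_adjoint_approx_eigenvector:
  fixes H :: "'a::{complex_inner,complete_space} bop"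
  assumes sa: "star H = H" and m: "m = onorm (app H)" "0 < m" and \<epsilon>: "0 < \<epsilon>"
  shows "\<exists>x. norm x = 1 \<and> norm (app (scal (of_real (m\<^sup>2)) - H * H) x) < \<epsilon>"
proof -
  have lin: "bounded_linear (app H)"
    by (rule bounded_op_bounded_linear[OF bounded_op_app])
  define d where "d = min m (\<epsilon>\<^sup>2 / (2 * m ^ 3 + 1))"
  have "0 < \<epsilon>\<^sup>2 / (2 * m ^ 3 + 1)"
    using m(2) \<epsilon> by (simp add: add_pos_nonneg)
  then have "0 < d" "d \<le> m" "d \<le> \<epsilon>\<^sup>2 / (2 * m ^ 3 + 1)"
    using m(2) by (simp_all add: d_def)
  moreover have "0 < 2 * m ^ 3 + 1"
    using m(2) by (simp add: add_pos_nonneg)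
  ultimately have d: "0 < d" "d \<le> m" "d * (2 * m ^ 3 + 1) \<le> \<epsilon>\<^sup>2"
    by (simp_all add: le_divide_eq)
  obtain x where x: "norm x = 1" "m - d < norm (app H x)"
    using onorm_almost_attained[OF lin] d(1,2) m(1) by blast
  define y where "y = app H x"
  have y: "m - d < norm y" "norm y \<le> m" "norm (app H y) \<le> m * norm y"
    using x onorm[OF lin, of x] onorm[OF lin, of y] by (simp_all add: y_def m(1))
  have "cinner (scaleC (of_real (m\<^sup>2)) x) (app H y) = of_real (m\<^sup>2) * cinner y y"
    using cinner_star[of H x y] sa by (simp add: cinner_scaleC_left y_def)
  then have "Re (cinner (scaleC (of_real (m\<^sup>2)) x) (app H y)) = m\<^sup>2 * (norm y)\<^sup>2"
    by (simp add: cinner_self)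
  then have "(norm (app (scal (of_real (m\<^sup>2)) - H * H) x))\<^sup>2
      = (m\<^sup>2)\<^sup>2 + (norm (app H y))\<^sup>2 - 2 * (m\<^sup>2 * (norm y)\<^sup>2)"
    by (simp add: norm_diff_square norm_scaleC norm_power x(1) y_def[symmetric])
  also have "\<dots> \<le> (m\<^sup>2)\<^sup>2 + (m * norm y)\<^sup>2 - 2 * (m\<^sup>2 * (norm y)\<^sup>2)"
    using y(3) by (simp add: power_mono)
  also have "\<dots> = m\<^sup>2 * ((m - norm y) * (m + norm y))"
    by (simp add: power2_eq_square algebra_simps)
  also have "\<dots> \<le> m\<^sup>2 * (d * (2 * m))"
    using y(1,2) m(2) by (intro mult_left_mono mult_mono) auto
  also have "\<dots> < \<epsilon>\<^sup>2"
    using d by (simp add: power2_eq_square power3_eq_cube algebra_simps)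
  finally have "norm (app (scal (of_real (m\<^sup>2)) - H * H) x) < \<epsilon>"
    using less_imp_le[OF \<epsilon>] by (rule power2_less_imp_less)
  with x(1) show ?thesis by blast
qed

lemma self_adjoint_spectrum_nonzero:
  fixes H :: "'a::{complex_inner,complete_space} bop"
  assumes sa: "star H = H" and "H \<noteq> 0"
  shows "\<exists>r::real. r \<noteq> 0 \<and> complex_of_real r \<in> spectrum H"
proof -
  define m where "m = onorm (app H)"
  have "\<exists>x. app H x \<noteq> 0"
    using \<open>H \<noteq> 0\<close> bop_eqI[of H 0] by auto
  then have "0 < m"
    unfolding m_def by (simp add: onorm_pos_lt bounded_op_bounded_linear[OF bounded_op_app])
  define c where "c = complex_of_real m"
  have "\<not> is_invertible (scal (c * c) - H * H)"
    by (rule not_invertible_if_approx_kernel)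
      (use self_adjoint_approx_eigenvector[OF sa m_def \<open>0 < m\<close>] in
        \<open>simp add: c_def power2_eq_square\<close>)
  moreover have "scal (c * c) - H * H = - ((scal c - H) * (scal (- c) - H))"
    using scal_commute[of c H] by (simp add: algebra_simps scal_minus scal_mult)
  ultimately have "\<not> is_invertible (scal c - H) \<or> \<not> is_invertible (scal (- c) - H)"
    using is_invertible_mult is_invertible_uminus by metis
  then show ?thesis
  proof
    assume "\<not> is_invertible (scal c - H)"
    with \<open>0 < m\<close> show ?thesis
      by (intro exI[of _ m]) (simp add: spectrum_def c_def)
  next
    assume "\<not> is_invertible (scal (- c) - H)"
    with \<open>0 < m\<close> show ?thesis
      by (intro exI[of _ "- m"]) (simp add: spectrum_def c_def)
  qed
qed

lemma map_poly_cnj_prod_linear: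
  assumes "finite L" "cnj ` L = L"
  shows "map_poly cnj (\<Prod>l\<in>L. [:- l, 1:]) = (\<Prod>l\<in>L. [:- l, 1:])"
proof -
  have "poly (map_poly cnj (\<Prod>l\<in>L. [:- l, 1:])) z = (\<Prod>l\<in>L. z - cnj l)" for z
    by (simp add: poly_prod)
  also have "(\<Prod>l\<in>L. z - cnj l) = (\<Prod>l\<in>cnj ` L. z - l)" for z
  proof -
    have "inj_on cnj L" by (rule inj_onI) (metis complex_cnj_cnj)
    then show ?thesis by (simp only: prod.reindex o_def)
  qed
  finally have "poly (map_poly cnj (\<Prod>l\<in>L. [:- l, 1:])) = poly (\<Prod>l\<in>L. [:- l, 1:])"
    using assms(2) by (intro ext) (simp add: poly_prod)
  then show ?thesis by (simp only: poly_eq_poly_eq_iff)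
qed

lemma poly_prod_linear_eq_0_iff:
  fixes x :: "'a::idom"
  assumes "finite L"
  shows "poly (\<Prod>l\<in>L. [:- l, 1:]) x = 0 \<longleftrightarrow> x \<in> L"
proof -
  have "poly (\<Prod>l\<in>L. [:- l, 1:]) x = (\<Prod>l\<in>L. x - l)"
    by (simp add: poly_prod)
  then show ?thesis
    using \<open>finite L\<close> by simp
qed

lemma peval_annihilating_poly:
  fixes h :: "'a::{complex_inner,complete_space} bop"
  assumes sa: "star h = h" and L: "finite L" "L \<noteq> {}" "cnj ` L = L" "spectrum h \<subseteq> L"
  shows "peval (\<Prod>l\<in>L. [:- l, 1:]) h = 0" (is "peval ?N h = 0")
  \<comment> \<open>Otherwise the self-adjoint \<open>?N h\<close> has a spectral value \<open>r \<noteq> 0\<close>, but \<open>r - ?N\<close> has no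
    zero on the spectrum of \<open>h\<close>.\<close>
proof (rule ccontr)
  assume "peval ?N h \<noteq> 0"
  moreover have "star (peval ?N h) = peval ?N h"
    using peval_star[OF sa] map_poly_cnj_prod_linear[OF L(1,3)] by simp
  ultimately obtain r :: real where r: "r \<noteq> 0" "complex_of_real r \<in> spectrum (peval ?N h)"
    using self_adjoint_spectrum_nonzero by blast
  have val: "poly ([:complex_of_real r:] - ?N) l = r" if "l \<in> L" for l
    using that L(1) by (simp add: poly_prod_linear_eq_0_iff)
  obtain l where "l \<in> L"
    using L(2) by blast
  with val r(1) have "[:complex_of_real r:] - ?N \<noteq> 0"
    by (metis of_real_eq_0_iff poly_0)
  moreover have "poly ([:complex_of_real r:] - ?N) l \<noteq> 0" if "l \<in> spectrum h" for l
    using val that L(4) r(1) by auto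
  ultimately have "is_invertible (peval ([:complex_of_real r:] - ?N) h)"
    by (rule is_invertible_peval)
  with r(2) show False
    by (simp add: spectrum_def peval_diff)
qed

lemma exists_real_lagrange_poly:
  fixes \<Lambda> :: "complex set"
  assumes fin: "finite \<Lambda>" and cnj: "cnj ` \<Lambda> = \<Lambda>" and l0: "l0 \<in> \<Lambda>" "cnj l0 = l0"
  shows "\<exists>L c. map_poly cnj L = L \<and> poly L l0 = 1 \<and> (\<forall>l\<in>\<Lambda> - {l0}. poly L l = 0) \<and>
    [:- l0, 1:] * L = smult c (\<Prod>l\<in>\<Lambda>. [:- l, 1:])"
proof -
  define Q where "Q = (\<Prod>l\<in>\<Lambda> - {l0}. [:- l, 1:])"
  have "cnj ` (\<Lambda> - {l0}) = \<Lambda> - {l0}"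
  proof -
    have "cnj ` (\<Lambda> - {l0}) = cnj ` \<Lambda> - cnj ` {l0}"
      by (rule image_set_diff) (metis complex_cnj_cnj injI)
    then show ?thesis
      using cnj l0(2) by simp
  qed
  then have "map_poly cnj Q = Q"
    unfolding Q_def using fin by (intro map_poly_cnj_prod_linear) auto
  moreover have Ql0: "poly Q l0 \<noteq> 0"
    unfolding Q_def using fin by (simp add: poly_prod_linear_eq_0_iff)
  moreover have "cnj (poly Q l0) = poly Q l0"
    by (metis \<open>map_poly cnj Q = Q\<close> l0(2) poly_map_poly_cnj)
  ultimately have "map_poly cnj (smult (1 / poly Q l0) Q) = smult (1 / poly Q l0) Q"
    by (simp add: map_poly_smult)
  moreover have "poly (smult (1 / poly Q l0) Q) l0 = 1"
    using Ql0 by simp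
  moreover have "\<forall>l\<in>\<Lambda> - {l0}. poly (smult (1 / poly Q l0) Q) l = 0"
    unfolding Q_def using fin by (simp add: poly_prod_linear_eq_0_iff)
  moreover have "[:- l0, 1:] * smult (1 / poly Q l0) Q = smult (1 / poly Q l0) (\<Prod>l\<in>\<Lambda>. [:- l, 1:])"
    unfolding Q_def using prod.remove[OF fin l0(1), of "\<lambda>l. [:- l, 1:]"] by (simp add: mult_smult_right)
  ultimately show ?thesis by blast
qed

lemma spectral_projection:
  fixes h :: "'a::{complex_inner,complete_space} bop"
  assumes sa: "star h = h" and "h \<noteq> 0" and fin: "finite (spectrum h)"
  obtains q l where "l \<noteq> 0" "projection (h * peval q h)" "h * peval q h \<noteq> 0"
    "h * (h * peval q h) = scal l * (h * peval q h)"
proof -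
  obtain r :: real where "r \<noteq> 0" and r: "complex_of_real r \<in> spectrum h"
    using self_adjoint_spectrum_nonzero[OF sa \<open>h \<noteq> 0\<close>] by blast
  \<comment> \<open>Closing under \<open>cnj\<close> makes the polynomials below real, so they send \<open>h\<close> to
    self-adjoint operators; \<open>0 \<in> \<Lambda>\<close> makes \<open>L\<close> vanish at \<open>0\<close>, so that \<open>L h \<in> h A\<close>.\<close>
  define \<Lambda> where "\<Lambda> = spectrum h \<union> cnj ` spectrum h \<union> {0}"
  have \<Lambda>: "finite \<Lambda>" "\<Lambda> \<noteq> {}" "cnj ` \<Lambda> = \<Lambda>" "spectrum h \<subseteq> \<Lambda>"
    using fin by (auto simp: \<Lambda>_def image_Un image_image)
  obtain L c where L: "map_poly cnj L = L" "poly L r = 1" "\<forall>l\<in>\<Lambda> - {complex_of_real r}. poly L l = 0"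
    and Lc: "[:- complex_of_real r, 1:] * L = smult c (\<Prod>l\<in>\<Lambda>. [:- l, 1:])"
    using exists_real_lagrange_poly[OF \<Lambda>(1,3)] r \<Lambda>(4) by (metis complex_cnj_complex_of_real subsetD)
  have "poly L 0 = 0"
    using L(3) \<open>r \<noteq> 0\<close> by (simp add: \<Lambda>_def)
  then obtain q where q: "L = [:0, 1:] * q"
    using poly_eq_0_iff_dvd by (metis dvdE minus_zero)
  define f where "f = peval L h"
  have f: "f = h * peval q h"
    by (simp add: f_def q peval_mult)
  have "(h - scal r) * f = scal c * peval (\<Prod>l\<in>\<Lambda>. [:- l, 1:]) h"
    unfolding f_def peval_linear[symmetric] peval_mult[symmetric] peval_smult[symmetric] Lc ..
  then have hf: "h * f = scal r * f"
    using peval_annihilating_poly[OF sa \<Lambda>(1-4)] by (simp add: algebra_simps)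
  have "projection f"
    using peval_eigen[OF hf, of L] peval_star[OF sa, of L] L(1,2)
    by (simp add: projection_def f_def)
  moreover have "f \<noteq> 0"
  proof
    assume "f = 0"
    with poly_in_spectrum_peval[OF r, of L] L(2) have "\<not> is_invertible (scal 1 - 0 :: 'a bop)"
      by (simp add: spectrum_def f_def)
    then show False
      by (simp add: is_invertible_one)
  qed
  ultimately show ?thesis
    using that[of r q] hf \<open>r \<noteq> 0\<close> by (simp add: f)
qed

section \<open>Projections and orthogonal families\<close>

definition orthogonal_projections :: "'a::{complex_inner,complete_space} bop set \<Rightarrow> 'a bop set \<Rightarrow> bool"
  where "orthogonal_projections AA D \<longleftrightarrow>
    (\<forall>p\<in>D. p \<in> AA \<and> projection p \<and> p \<noteq> 0) \<and> pairwise (\<lambda>p q. p * q = 0) D"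

definition strict_projection_chain ::
    "'a::{complex_inner,complete_space} bop set \<Rightarrow> (nat \<Rightarrow> 'a bop) \<Rightarrow> bool"
  where "strict_projection_chain AA s \<longleftrightarrow>
    (\<forall>n. s n \<in> AA \<and> projection (s n) \<and> s n * s (Suc n) = s n \<and> s n \<noteq> s (Suc n))"

lemma star_mult_projections: "projection p \<Longrightarrow> projection q \<Longrightarrow> star (p * q) = q * p"
  by (simp add: projection_def star_mult)

lemma projection_le_commute: "projection p \<Longrightarrow> projection q \<Longrightarrow> p * q = p \<Longrightarrow> q * p = p"
  using star_mult_projections[of p q] by (simp add: projection_def)

lemma projection_orthogonal_commute: "projection p \<Longrightarrow> projection q \<Longrightarrow> p * q = 0 \<Longrightarrow> q * p = 0"
  using star_mult_projections[of p q] by simp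

lemma projection_diff:
  assumes p: "projection p" and q: "projection q" and pq: "p * q = p"
  shows "projection (q - p)"
proof -
  have "q * p = p"
    by (rule projection_le_commute[OF p q pq])
  with p q pq show ?thesis
    by (simp add: projection_def star_diff algebra_simps)
qed

lemma projection_add:
  assumes p: "projection p" and q: "projection q" and pq: "p * q = 0"
  shows "projection (p + q)"
proof -
  have "q * p = 0"
    by (rule projection_orthogonal_commute[OF p q pq])
  with p q pq show ?thesis
    by (simp add: projection_def star_add algebra_simps)
qed

lemma chain_mult_le:
  fixes s :: "nat \<Rightarrow> 'a::semigroup_mult"
  assumes "\<And>n. s n * s n = s n" "\<And>n. s n * s (Suc n) = s n" "n \<le> m"
  shows "s n * s m = s n"
  using assms(3)
proof (induct m rule: dec_induct)
  case (step m)
  have "s n * s (Suc m) = s n * s m * s (Suc m)"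
    using step(3) by simp
  also have "\<dots> = s n * (s m * s (Suc m))"
    by (rule mult.assoc)
  also have "\<dots> = s n"
    using assms(2)[of m] step(3) by simp
  finally show ?case .
qed (rule assms(1))

lemma orthogonal_projections_range:
  fixes d :: "nat \<Rightarrow> 'a::{complex_inner,complete_space} bop"
  assumes "\<And>n. d n \<in> AA" "\<And>n. projection (d n)" "\<And>n. d n \<noteq> 0"
    and orth: "\<And>n m. n < m \<Longrightarrow> d n * d m = 0"
  shows "infinite (range d) \<and> orthogonal_projections AA (range d)"
proof
  have orth': "d n * d m = 0" if "n \<noteq> m" for n m
  proof (cases "n < m")
    case False
    with that have "d m * d n = 0"
      by (intro orth) simp
    then show ?thesis
      by (rule projection_orthogonal_commute[OF assms(2) assms(2)])
  qed (rule orth)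
  have "inj d"
  proof (rule injI, rule ccontr)
    fix n m
    assume "d n = d m" "n \<noteq> m"
    then have "d n = d n * d m"
      using assms(2)[of n] by (simp add: projection_def)
    with orth'[OF \<open>n \<noteq> m\<close>] assms(3)[of n] show False by simp
  qed
  then show "infinite (range d)"
    by (rule range_inj_infinite)
  show "orthogonal_projections AA (range d)"
    using assms(1-3) orth' unfolding orthogonal_projections_def pairwise_def by (metis rangeE)
qed

lemma pairwise_orthogonal_insert:
  assumes "projection q" "\<And>i. i \<in> E \<Longrightarrow> projection i" "\<And>i. i \<in> E \<Longrightarrow> q * i = 0"
    and "pairwise (\<lambda>p q. p * q = 0) E"
  shows "pairwise (\<lambda>p q. p * q = 0) (insert q E)"
  using assms projection_orthogonal_commute unfolding pairwise_insert by blast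

lemma orthogonal_projections_sum:
  assumes fin: "finite E" and E: "\<And>i. i \<in> E \<Longrightarrow> projection i"
    and orth: "pairwise (\<lambda>p q. p * q = 0) E" and i: "i \<in> E"
  shows "i * \<Sum>E = i" "\<Sum>E * i = i"
proof -
  have "i * \<Sum>E = (\<Sum>j\<in>E. i * j)"
    by (simp add: sum_distrib_left)
  also have "\<dots> = i * i + (\<Sum>j\<in>E - {i}. i * j)"
    by (rule sum.remove[OF fin i])
  also have "(\<Sum>j\<in>E - {i}. i * j) = 0"
    using orth i by (intro sum.neutral) (auto simp: pairwise_def)
  finally show "i * \<Sum>E = i"
    using E[OF i] by (simp add: projection_def)
  have "\<Sum>E * i = (\<Sum>j\<in>E. j * i)"
    by (simp add: sum_distrib_right)
  also have "\<dots> = i * i + (\<Sum>j\<in>E - {i}. j * i)"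
    by (rule sum.remove[OF fin i])
  also have "(\<Sum>j\<in>E - {i}. j * i) = 0"
    using orth i by (intro sum.neutral) (auto simp: pairwise_def)
  finally show "\<Sum>E * i = i"
    using E[OF i] by (simp add: projection_def)
qed

lemma projection_sum:
  assumes fin: "finite E" and E: "\<And>i. i \<in> E \<Longrightarrow> projection i"
    and orth: "pairwise (\<lambda>p q. p * q = 0) E"
  shows "projection (\<Sum>E)"
proof -
  have "\<Sum>E * \<Sum>E = \<Sum>E"
    using orthogonal_projections_sum(1)[OF assms] by (simp add: sum_distrib_right)
  moreover have "star (\<Sum>E) = \<Sum>E"
    using E by (simp add: star_sum projection_def)
  ultimately show ?thesis
    by (simp add: projection_def)
qed

section \<open>Star algebras of operators\<close>

locale bop_star_algebra =
  fixes AA :: "'a::{complex_inner,complete_space} bop set"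
  assumes zero_in: "0 \<in> AA"
    and add_in: "S \<in> AA \<Longrightarrow> T \<in> AA \<Longrightarrow> S + T \<in> AA"
    and mult_in: "S \<in> AA \<Longrightarrow> T \<in> AA \<Longrightarrow> S * T \<in> AA"
    and scal_mult_in: "T \<in> AA \<Longrightarrow> scal c * T \<in> AA"
    and star_in: "T \<in> AA \<Longrightarrow> star T \<in> AA"
begin

lemma diff_in: "S \<in> AA \<Longrightarrow> T \<in> AA \<Longrightarrow> S - T \<in> AA"
  using add_in[of S "scal (- 1) * T"] scal_mult_in[of T "- 1"] by (simp add: scal_minus)

lemma sum_in: "(\<And>x. x \<in> X \<Longrightarrow> f x \<in> AA) \<Longrightarrow> sum f X \<in> AA"
  by (induct X rule: infinite_finite_induct) (simp_all add: zero_in add_in)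

lemma mult_peval_in: "h \<in> AA \<Longrightarrow> h * peval p h \<in> AA"
proof (induct p)
  case (pCons a p)
  have "h * peval (pCons a p) h = scal a * h + h * (h * peval p h)"
    using scal_commute[of a h] by (simp add: distrib_left)
  with pCons show ?case
    by (simp add: add_in mult_in scal_mult_in)
qed (simp add: zero_in)

lemma re_part_in: "y \<in> AA \<Longrightarrow> re_part y \<in> AA"
  unfolding re_part_def by (intro scal_mult_in add_in star_in)

lemma im_part_in: "y \<in> AA \<Longrightarrow> im_part y \<in> AA"
  unfolding im_part_def by (intro scal_mult_in diff_in star_in)

lemma infinite_orthogonal_if_strict_chain:
  assumes "strict_projection_chain AA s"
  shows "\<exists>D. infinite D \<and> orthogonal_projections AA D"
proof -
  have s: "s n \<in> AA" "projection (s n)" "s n * s (Suc n) = s n" "s n \<noteq> s (Suc n)" for n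
    using assms by (auto simp: strict_projection_chain_def)
  have le: "s n * s m = s n" if "n \<le> m" for n m
    using chain_mult_le[of s n m] s(2,3) that by (simp add: projection_def)
  define d where "d n = s (Suc n) - s n" for n
  have d: "d n \<in> AA" "projection (d n)" "d n \<noteq> 0" for n
    using s[of n] s(1)[of "Suc n"] projection_diff[OF s(2)[of n] s(2)[of "Suc n"] s(3)[of n]]
    by (simp_all add: d_def diff_in)
  have orth: "d n * d m = 0" if "n < m" for n m
    using le[of "Suc n" "Suc m"] le[of "Suc n" m] le[of n "Suc m"] le[of n m] that
    by (simp add: d_def algebra_simps)
  then show ?thesis
    using orthogonal_projections_range[of d AA] d by blast
qed

lemma strict_chain_if_infinite_orthogonal:
  assumes "infinite D" and D: "orthogonal_projections AA D"
  shows "\<exists>s. strict_projection_chain AA s"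
proof -
  obtain f :: "nat \<Rightarrow> _" where "inj f" "range f \<subseteq> D"
    using infinite_countable_subset[OF \<open>infinite D\<close>] by blast
  then have f: "f n \<in> AA" "projection (f n)" "f n \<noteq> 0" for n
    using D unfolding orthogonal_projections_def by auto
  have orth: "f n * f m = 0" if "n \<noteq> m" for n m
  proof -
    have "f n \<noteq> f m"
      using \<open>inj f\<close> that by (auto dest: injD)
    moreover have "f n \<in> D" "f m \<in> D"
      using \<open>range f \<subseteq> D\<close> by auto
    ultimately show ?thesis
      using D unfolding orthogonal_projections_def pairwise_def by blast
  qed
  define s where "s n = (\<Sum>k\<le>n. f k)" for n
  have sS: "s (Suc n) = s n + f (Suc n)" for n
    by (simp add: s_def)
  have s_orth: "s n * f m = 0" if "n < m" for n m
    unfolding s_def sum_distrib_right using orth that by (intro sum.neutral) auto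
  have s: "s n \<in> AA \<and> projection (s n)" for n
  proof (induct n)
    case 0
    then show ?case using f by (simp_all add: s_def)
  next
    case (Suc n)
    then show ?case
      using f[of "Suc n"] s_orth[of n "Suc n"] by (simp_all add: sS add_in projection_add)
  qed
  have "s n * s (Suc n) = s n" "s n \<noteq> s (Suc n)" for n
    using s[of n] s_orth[of n "Suc n"] f(3)[of "Suc n"]
    by (simp_all add: sS distrib_left projection_def)
  with s show ?thesis
    unfolding strict_projection_chain_def by blast
qed

lemma strict_chain_of_complements:
  assumes p: "p \<in> AA" "projection p"
    and s: "\<And>n. s n \<in> AA" "\<And>n. projection (s n)" "\<And>n. s n * p = s n"
    and dec: "\<And>n. s (Suc n) * s n = s (Suc n)" "\<And>n. s (Suc n) \<noteq> s n"
  shows "strict_projection_chain AA (\<lambda>n. p - s n)"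
proof -
  have "p * s n = s n" "s n * s (Suc n) = s (Suc n)" for n
    using projection_le_commute[OF s(2) p(2) s(3)] projection_le_commute[OF s(2) s(2) dec(1)]
    by auto
  then have "(p - s n) * (p - s (Suc n)) = p - s n" for n
    using p(2) s(3)[of n] s(3)[of "Suc n"] by (simp add: algebra_simps projection_def)
  moreover have "p - s n \<in> AA" "projection (p - s n)" "p - s n \<noteq> p - s (Suc n)" for n
    using p s(1,2,3) dec(2)[of n] by (simp_all add: diff_in projection_diff)
  ultimately show ?thesis
    unfolding strict_projection_chain_def by blast
qed

end

section \<open>Minimal projections and finite dimension\<close>

interpretation bop_space: vector_space "\<lambda>c (T::'a::complex_inner bop). scal c * T"
  by unfold_locales (simp_all add: algebra_simps scal_add scal_mult mult.assoc)

definition finite_dim :: "'a::complex_inner bop set \<Rightarrow> bool"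
  where "finite_dim AA \<longleftrightarrow> (\<exists>B. finite B \<and> B \<subseteq> AA \<and> AA \<subseteq> bop_space.span B)"

lemma finite_orthogonal_projections_if_finite_dim:
  assumes "finite_dim AA" and D: "orthogonal_projections AA D"
  shows "finite D"
proof -
  obtain B where B: "finite B" "B \<subseteq> AA" "AA \<subseteq> bop_space.span B"
    using assms(1) unfolding finite_dim_def by blast
  have D_in: "p \<in> AA" "p * p = p" "p \<noteq> 0" if "p \<in> D" for p
    using D that by (auto simp: orthogonal_projections_def projection_def)
  have D_orth: "p * q = 0" if "p \<in> D" "q \<in> D" "p \<noteq> q" for p q
    using D that by (auto simp: orthogonal_projections_def pairwise_def)
  have "bop_space.independent D"
    unfolding bop_space.independent_explicit_finite_subsets
  proof (intro allI impI ballI)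
    fix S u v
    assume S: "S \<subseteq> D" "finite S" and sum0: "(\<Sum>w\<in>S. scal (u w) * w) = 0" and v: "v \<in> S"
    have "v * (\<Sum>w\<in>S. scal (u w) * w) = (\<Sum>w\<in>S. scal (u w) * (v * w))"
      unfolding sum_distrib_left by (rule sum.cong[OF refl], rule mult_scal_left_commute)
    also have "\<dots> = scal (u v) * (v * v) + (\<Sum>w\<in>S - {v}. scal (u w) * (v * w))"
      by (rule sum.remove[OF S(2) v])
    also have "(\<Sum>w\<in>S - {v}. scal (u w) * (v * w)) = 0"
      using S(1) v D_orth by (intro sum.neutral) auto
    finally have "scal (u v) * v = 0"
      using sum0 D_in(2) S(1) v by auto
    with D_in(3) S(1) v show "u v = 0"
      using scal_mult_eq_0_iff by blast
  qed
  moreover have "D \<subseteq> bop_space.span B"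
    using D_in(1) B(3) by blast
  ultimately show ?thesis
    using bop_space.independent_span_bound[OF B(1)] by blast
qed

definition minimal_projection :: "'a::{complex_inner,complete_space} bop set \<Rightarrow> 'a bop \<Rightarrow> bool"
  where "minimal_projection AA p \<longleftrightarrow> p \<in> AA \<and> projection p \<and> p \<noteq> 0 \<and>
    (\<forall>q\<in>AA. projection q \<and> q \<noteq> 0 \<and> q * p = q \<longrightarrow> q = p)"

context bop_star_algebra
begin

lemma exists_minimal_projection_below:
  assumes no_inf: "\<nexists>D. infinite D \<and> orthogonal_projections AA D"
    and p: "p \<in> AA" "projection p" "p \<noteq> 0"
  shows "\<exists>q. minimal_projection AA q \<and> q * p = q"
proof (rule ccontr)
  assume none: "\<nexists>q. minimal_projection AA q \<and> q * p = q"
  define P where "P q \<longleftrightarrow> q \<in> AA \<and> projection q \<and> q \<noteq> 0 \<and> q * p = q" for q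
  have step: "\<exists>r. P r \<and> r * q = r \<and> r \<noteq> q" if "P q" for q
  proof -
    from that none have "\<not> minimal_projection AA q"
      by (auto simp: P_def)
    with that obtain r where r: "r \<in> AA" "projection r" "r \<noteq> 0" "r * q = r" "r \<noteq> q"
      unfolding minimal_projection_def P_def by blast
    have "q * p = q"
      using that by (simp add: P_def)
    then have "r * p = r"
      using r(4) by (metis mult.assoc)
    with r show ?thesis
      unfolding P_def by blast
  qed
  \<comment> \<open>Iterating yields a strictly decreasing chain below \<open>p\<close>, whose complements in \<open>p\<close>
    form a strictly increasing chain.\<close>
  define smaller where "smaller q = (SOME r. P r \<and> r * q = r \<and> r \<noteq> q)" for q
  have smaller: "P (smaller q) \<and> smaller q * q = smaller q \<and> smaller q \<noteq> q" if "P q" for q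
    unfolding smaller_def by (rule someI_ex[OF step[OF that]])
  define s where "s n = (smaller ^^ n) p" for n
  have Ps: "P (s n)" for n
  proof (induct n)
    case 0
    show ?case
      using p by (simp add: s_def P_def projection_def)
  next
    case (Suc n)
    then show ?case
      using smaller[OF Suc] by (simp add: s_def)
  qed
  have "strict_projection_chain AA (\<lambda>n. p - s n)"
  proof (rule strict_chain_of_complements[OF p(1,2)])
    show "s n \<in> AA" "projection (s n)" "s n * p = s n" for n
      using Ps[of n] by (simp_all add: P_def)
    show "s (Suc n) * s n = s (Suc n)" "s (Suc n) \<noteq> s n" for n
      using smaller[OF Ps[of n]] by (simp_all add: s_def)
  qed
  then show False
    using no_inf infinite_orthogonal_if_strict_chain by blast
qed

lemma exists_maximal_family_of_minimal_projections:
  assumes no_inf: "\<nexists>D. infinite D \<and> orthogonal_projections AA D"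
  shows "\<exists>E. finite E \<and> (\<forall>i\<in>E. minimal_projection AA i) \<and> pairwise (\<lambda>p q. p * q = 0) E \<and>
    (\<forall>q. minimal_projection AA q \<longrightarrow> (\<exists>i\<in>E. q * i \<noteq> 0))"
proof (rule ccontr)
  define good where "good E \<longleftrightarrow>
    finite E \<and> (\<forall>i\<in>E. minimal_projection AA i) \<and> pairwise (\<lambda>p q. p * q = 0) E" for E
  assume no_max: "\<not> ?thesis"
  \<comment> \<open>Then minimal projections can be added one at a time forever, giving an infinite
    orthogonal family.\<close>
  have extend: "\<exists>q. minimal_projection AA q \<and> (\<forall>i\<in>E. q * i = 0)" if "good E" for E
  proof (rule ccontr)
    assume "\<nexists>q. minimal_projection AA q \<and> (\<forall>i\<in>E. q * i = 0)"
    then have "\<forall>q. minimal_projection AA q \<longrightarrow> (\<exists>i\<in>E. q * i \<noteq> 0)"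
      by blast
    with that no_max show False
      unfolding good_def by blast
  qed
  define new where "new E = (SOME q. minimal_projection AA q \<and> (\<forall>i\<in>E. q * i = 0))" for E
  have new: "minimal_projection AA (new E) \<and> (\<forall>i\<in>E. new E * i = 0)" if "good E" for E
    unfolding new_def by (rule someI_ex[OF extend[OF that]])
  define F where "F n = ((\<lambda>E. insert (new E) E) ^^ n) {}" for n
  have FS: "F (Suc n) = insert (new (F n)) (F n)" for n
    by (simp add: F_def)
  have good: "good (F n)" for n
  proof (induct n)
    case (Suc n)
    have "pairwise (\<lambda>p q. p * q = 0) (F (Suc n))"
      unfolding FS using new[OF Suc] Suc
      by (intro pairwise_orthogonal_insert) (auto simp: good_def minimal_projection_def)
    with new[OF Suc] Suc show ?case
      by (simp add: good_def FS)
  qed (simp add: F_def good_def)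
  define d where "d n = new (F n)" for n
  have "d n \<in> F m" if "n < m" for n m
    using that
  proof (induct m)
    case (Suc m)
    then show ?case
      by (cases "n = m") (simp_all add: FS d_def)
  qed simp
  then have "d m * d n = 0" if "n < m" for n m
    using new[OF good[of m]] that by (simp add: d_def)
  moreover have d: "d n \<in> AA" "projection (d n)" "d n \<noteq> 0" for n
    using new[OF good[of n]] by (simp_all add: d_def minimal_projection_def)
  ultimately have "infinite (range d) \<and> orthogonal_projections AA (range d)"
    by (intro orthogonal_projections_range) (auto intro: projection_orthogonal_commute)
  with no_inf show False
    by blast
qed

end

locale bop_R_star_algebra = bop_star_algebra +
  assumes finite_spectrum: "h \<in> AA \<Longrightarrow> star h = h \<Longrightarrow> finite (spectrum h)"
begin

lemma spectral_projection_in: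
  assumes "h \<in> AA" "star h = h" "h \<noteq> 0"
  obtains f l where "f \<in> AA" "projection f" "f \<noteq> 0" "l \<noteq> 0" "h * f = scal l * f" "\<exists>g. f = h * g"
proof -
  obtain q l where "l \<noteq> 0" "projection (h * peval q h)" "h * peval q h \<noteq> 0"
    "h * (h * peval q h) = scal l * (h * peval q h)"
    using spectral_projection[OF assms(2,3) finite_spectrum[OF assms(1,2)]] by blast
  with mult_peval_in[OF assms(1)] show ?thesis
    using that by blast
qed

lemma minimal_projection_corner_self_adjoint:
  assumes e: "minimal_projection AA e" and h: "h \<in> AA" "star h = h" "e * h = h" "h * e = h"
  shows "\<exists>c. h = scal c * e"
proof (cases "h = 0")
  case True
  then show ?thesis by (intro exI[of _ 0]) simp
next
  case False
  then obtain f l where f: "f \<in> AA" "projection f" "f \<noteq> 0" and hf: "h * f = scal l * f"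
    and "\<exists>g. f = h * g"
    using spectral_projection_in[OF h(1,2)] by metis
  then have "e * f = f"
    using h(3) by (metis mult.assoc)
  moreover have "star (e * f) = f * e"
    using e f(2) by (simp add: star_mult_projections minimal_projection_def)
  ultimately have "f * e = f"
    using f(2) by (simp add: projection_def)
  with e f have "f = e"
    unfolding minimal_projection_def by blast
  with hf h(4) show ?thesis
    by auto
qed

lemma minimal_projection_corner:
  assumes e: "minimal_projection AA e" and y: "y \<in> AA" "e * y = y" "y * e = y"
  shows "\<exists>c. y = scal c * e"
proof -
  have "projection e"
    using e by (simp add: minimal_projection_def)
  then have "e * star y = star y" "star y * e = star y"
    using y(2,3) by (metis projection_def star_mult)+
  then have "e * re_part y = re_part y" "re_part y * e = re_part y"
    "e * im_part y = im_part y" "im_part y * e = im_part y"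
    using y(2,3) by (simp_all add: re_part_def im_part_def mult_scal_left_commute mult.assoc
        distrib_left distrib_right right_diff_distrib left_diff_distrib)
  then obtain a b where "re_part y = scal a * e" "im_part y = scal b * e"
    using minimal_projection_corner_self_adjoint[OF e] re_part_in[OF y(1)] im_part_in[OF y(1)]
      star_re_part star_im_part by metis
  then have "y = scal (a + \<i> * b) * e"
    using re_im_part_decomposition[of y] by (simp add: scal_add scal_mult_scal distrib_right)
  then show ?thesis ..
qed

lemma corner_dim_le_1:
  assumes i: "minimal_projection AA i" and j: "minimal_projection AA j"
    and b: "b \<in> AA" "i * b = b" "b * j = b" "b \<noteq> 0"
    and x: "x \<in> AA" "i * x = x" "x * j = x"
  shows "\<exists>c. x = scal c * b"
proof -
  have pi: "projection i" and pj: "projection j"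
    using i j by (simp_all add: minimal_projection_def)
  have sb: "j * star b = star b" "star b * i = star b"
    using b(2,3) pi pj by (metis projection_def star_mult)+
  obtain c where c: "star b * x = scal c * j"
    using minimal_projection_corner[OF j, of "star b * x"] b(1) x(1,3) sb(1)
    by (metis mult.assoc mult_in star_in)
  obtain d where d: "b * star b = scal d * i"
    using minimal_projection_corner[OF i, of "b * star b"] b(1,2) sb(2)
    by (metis mult.assoc mult_in star_in)
  have "d \<noteq> 0"
  proof
    assume "d = 0"
    with d have "star (star b) * star b = 0" by simp
    then have "star b = 0" by (rule star_mult_self_eq_0)
    with b(4) show False by (metis star_star star_zero)
  qed
  have "scal d * x = b * star b * x"
    using d x(2) by (simp add: mult.assoc)
  also have "\<dots> = scal c * b"
    using c b(3) by (simp add: mult.assoc mult_scal_left_commute)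
  finally have "x = scal (inverse d * c) * b"
    using \<open>d \<noteq> 0\<close> by (metis scal_mult_scal left_inverse scal_one mult_1_left)
  then show ?thesis ..
qed

lemma corner_spanned_by_one:
  assumes i: "minimal_projection AA i" and j: "minimal_projection AA j"
  shows "\<exists>b\<in>AA. \<forall>x\<in>AA. i * x = x \<and> x * j = x \<longrightarrow> (\<exists>c. x = scal c * b)"
proof (cases "\<exists>b\<in>AA. i * b = b \<and> b * j = b \<and> b \<noteq> 0")
  case True
  then show ?thesis
    using corner_dim_le_1[OF i j] by blast
next
  case False
  then have "\<forall>x\<in>AA. i * x = x \<and> x * j = x \<longrightarrow> x = scal 0 * 0"
    by auto
  with zero_in show ?thesis
    by blast
qed

context
  fixes E :: "'a bop set"
  assumes finite_E: "finite E" and minimal_E: "\<And>i. i \<in> E \<Longrightarrow> minimal_projection AA i"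
    and orthogonal_E: "pairwise (\<lambda>p q. p * q = 0) E"
    and maximal_E: "\<And>q. minimal_projection AA q \<Longrightarrow> \<exists>i\<in>E. q * i \<noteq> 0"
    and no_inf: "\<nexists>D. infinite D \<and> orthogonal_projections AA D"
begin

lemma projection_E: "i \<in> E \<Longrightarrow> projection i"
  using minimal_E by (simp add: minimal_projection_def)

lemma sum_E_in: "\<Sum>E \<in> AA"
  using minimal_E by (intro sum_in) (simp add: minimal_projection_def)

lemma projection_sum_E: "projection (\<Sum>E)"
  using finite_E projection_E orthogonal_E by (rule projection_sum)

lemma complement_compression_eq_0:
  assumes a: "a \<in> AA" "star a = a"
  shows "(1 - \<Sum>E) * a * (1 - \<Sum>E) = 0"
  \<comment> \<open>Otherwise this corner contains a spectral projection, which is orthogonal to \<open>\<Sum>E\<close>,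
    and a minimal projection below it contradicts the maximality of \<open>E\<close>.\<close>
proof (rule ccontr)
  define e where "e = \<Sum>E"
  have e: "e * e = e" "star e = e"
    using projection_sum_E by (simp_all add: e_def projection_def)
  define h where "h = (1 - e) * a * (1 - e)"
  assume "(1 - \<Sum>E) * a * (1 - \<Sum>E) \<noteq> 0"
  then have "h \<noteq> 0" by (simp add: h_def e_def)
  have "h = a - e * a - a * e + e * a * e"
    by (simp add: h_def algebra_simps)
  then have "h \<in> AA"
    using a(1) sum_E_in by (simp add: e_def add_in diff_in mult_in)
  moreover have "star h = h"
    using a(2) e(2) by (simp add: h_def star_mult star_diff mult.assoc)
  ultimately obtain f where f: "f \<in> AA" "projection f" "f \<noteq> 0" and "\<exists>g. f = h * g"
    using spectral_projection_in \<open>h \<noteq> 0\<close> by metis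
  moreover have "e * h = 0"
    using e(1) by (simp add: h_def algebra_simps flip: mult.assoc)
  ultimately have "e * f = 0"
    by (metis mult.assoc mult_zero_left)
  then have "f * e = 0"
    using projection_orthogonal_commute[OF projection_sum_E f(2)] by (simp add: e_def)
  obtain q where q: "minimal_projection AA q" "q * f = q"
    using exists_minimal_projection_below[OF no_inf f] by blast
  have "q * i = 0" if "i \<in> E" for i
  proof -
    have "q * i = q * f * (e * i)"
      using q(2) orthogonal_projections_sum(2)[OF finite_E projection_E orthogonal_E that]
      by (simp add: e_def)
    also have "\<dots> = q * (f * e) * i"
      by (simp add: mult.assoc)
    finally show ?thesis
      using \<open>f * e = 0\<close> by simp
  qed
  with maximal_E[OF q(1)] show False
    by blast
qed

lemma compression_by_sum_E:
  assumes a: "a \<in> AA"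
  shows "\<Sum>E * a * \<Sum>E = a"
proof -
  define e where "e = \<Sum>E"
  define u where "u = 1 - e"
  have e: "e \<in> AA" "e * e = e" "star e = e"
    using sum_E_in projection_sum_E by (simp_all add: e_def projection_def)
  have u: "star u = u" "u * u = u" "e * u = 0" "u * e = 0"
    using e by (simp_all add: u_def star_diff algebra_simps)
  have u_mult: "u * (u * X) = u * X" "e * (e * X) = e * X" for X
    using u(2) e(2) by (simp_all flip: mult.assoc)
  \<comment> \<open>Each of \<open>u a e\<close>, \<open>e a u\<close>, \<open>u a u\<close> is killed by \<open>star_mult_self_eq_0\<close>, since
    multiplying it by its adjoint gives a compression \<open>u b u\<close> of a self-adjoint \<open>b \<in> AA\<close>.\<close>
  have compress: "u * b * u = 0" if "b \<in> AA" "star b = b" for b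
    using complement_compression_eq_0[OF that] by (simp add: u_def e_def)
  have "star (star (u * a * e)) * star (u * a * e) = 0"
    using compress[of "a * e * star a"] a e u
    by (simp add: star_mult mult.assoc u_mult mult_in star_in)
  then have "star (u * a * e) = 0"
    by (rule star_mult_self_eq_0)
  then have uae: "u * a * e = 0"
    by (metis star_star star_zero)
  have "star (e * a * u) * (e * a * u) = 0"
    using compress[of "star a * e * a"] a e u
    by (simp add: star_mult mult.assoc u_mult mult_in star_in)
  then have eau: "e * a * u = 0"
    by (rule star_mult_self_eq_0)
  define b where "b = star a * u * a"
  have "b = star a * a - star a * e * a"
    by (simp add: b_def u_def algebra_simps)
  then have "b \<in> AA"
    using a e(1) by (simp add: mult_in star_in diff_in)
  moreover have "star b = b"
    using u(1) by (simp add: b_def star_mult mult.assoc)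
  moreover have "star (u * a * u) * (u * a * u) = u * b * u"
    using u by (simp add: b_def star_mult mult.assoc u_mult)
  ultimately have "star (u * a * u) * (u * a * u) = 0"
    using compress by simp
  then have uau: "u * a * u = 0"
    by (rule star_mult_self_eq_0)
  have "a = (e + u) * a * (e + u)"
    by (simp add: u_def)
  also have "\<dots> = e * a * e"
    using uae eau uau by (simp add: algebra_simps)
  finally show ?thesis
    by (simp add: e_def)
qed

lemma finite_dim_if_maximal_family: "finite_dim AA"
proof -
  define spans where "spans i j b \<longleftrightarrow>
    b \<in> AA \<and> (\<forall>x\<in>AA. i * x = x \<and> x * j = x \<longrightarrow> (\<exists>c. x = scal c * b))" for i j b
  define b where "b i j = (SOME b. spans i j b)" for i j
  have b: "spans i j (b i j)" if "i \<in> E" "j \<in> E" for i j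
  proof -
    have "\<exists>b. spans i j b"
      using corner_spanned_by_one[OF minimal_E[OF that(1)] minimal_E[OF that(2)]]
      unfolding spans_def by blast
    then show ?thesis
      unfolding b_def by (rule someI_ex)
  qed
  define B where "B = (\<lambda>(i, j). b i j) ` (E \<times> E)"
  have "finite B" "B \<subseteq> AA"
    using finite_E b by (auto simp: B_def spans_def)
  moreover have "a \<in> bop_space.span B" if a: "a \<in> AA" for a
  proof -
    have "a = (\<Sum>j\<in>E. \<Sum>i\<in>E. i * a * j)"
      using compression_by_sum_E[OF a] by (simp add: sum_distrib_left sum_distrib_right)
    also have "\<dots> \<in> bop_space.span B"
    proof (intro bop_space.span_sum)
      fix j i
      assume ij: "i \<in> E" "j \<in> E"
      have "i \<in> AA" "j \<in> AA" "i * i = i" "j * j = j"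
        using minimal_E[OF ij(1)] minimal_E[OF ij(2)]
        by (simp_all add: minimal_projection_def projection_def)
      moreover from this have "i * (i * a * j) = i * a * j" "i * a * j * j = i * a * j"
        by (simp_all flip: mult.assoc) (simp add: mult.assoc)
      ultimately obtain c where "i * a * j = scal c * b i j"
        using b[OF ij] a unfolding spans_def by (meson mult_in)
      moreover have "b i j \<in> B"
        using ij by (force simp: B_def)
      ultimately show "i * a * j \<in> bop_space.span B"
        by (simp add: bop_space.span_base bop_space.span_scale)
    qed
    finally show ?thesis .
  qed
  ultimately show ?thesis
    unfolding finite_dim_def by blast
qed

end

lemma finite_dim_if_no_infinite_orthogonal:
  assumes "\<nexists>D. infinite D \<and> orthogonal_projections AA D"
  shows "finite_dim AA"
  using exists_maximal_family_of_minimal_projections[OF assms] finite_dim_if_maximal_family assms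
  by blast

end

section \<open>Back to sets of bounded functions\<close>

lemma app_Abs_bop: "bounded_op T \<Longrightarrow> app (Abs_bop T) = T"
  by (simp add: Abs_bop_inverse)

lemma app_eq_iff: "app S = app T \<longleftrightarrow> S = T"
  by (simp add: app_inject)

lemma app_zero_fun: "app 0 = (\<lambda>x. 0)"
  by (rule ext) simp

lemma app_comp: "app S \<circ> app T = app (S * T)"
  by (rule ext) simp

lemma app_star: "app (star T) = adj (app T)"
  by (simp add: star.rep_eq)

lemma app_eq_zero_iff: "app S = (\<lambda>x. 0) \<longleftrightarrow> S = 0"
  by (simp add: app_zero_fun[symmetric] app_eq_iff)

lemma is_invertible_iff_app:
  "is_invertible X \<longleftrightarrow> (\<exists>S. bounded_op S \<and> S \<circ> app X = id \<and> app X \<circ> S = id)"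
proof
  assume "is_invertible X"
  then obtain S where "S * X = 1" "X * S = 1"
    unfolding is_invertible_def by blast
  then show "\<exists>S. bounded_op S \<and> S \<circ> app X = id \<and> app X \<circ> S = id"
    by (intro exI[of _ "app S"]) (auto simp: bounded_op_app app_comp fun_eq_iff)
next
  assume "\<exists>S. bounded_op S \<and> S \<circ> app X = id \<and> app X \<circ> S = id"
  then obtain S where S: "bounded_op S" "S \<circ> app X = id" "app X \<circ> S = id"
    by blast
  then have "app (Abs_bop S * X) = app 1" "app (X * Abs_bop S) = app 1"
    by (simp_all add: app_comp[symmetric] app_Abs_bop fun_eq_iff)
  then show "is_invertible X"
    unfolding is_invertible_def app_eq_iff by blast
qed

lemma op_spectrum_app: "op_spectrum (app T) = spectrum T"
proof -
  have "app (scal z - T) = (\<lambda>x. scaleC z x - app T x)" for z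
    by (rule ext) simp
  then show ?thesis
    unfolding op_spectrum_def spectrum_def is_invertible_iff_app by simp
qed

lemma is_projection_app: "is_projection A (app p) \<longleftrightarrow> p \<in> app -` A \<and> projection p"
  by (simp add: is_projection_def projection_def app_comp app_eq_iff flip: app_star)

lemma bop_R_star_algebra_preimage:
  assumes "R_star_algebra A"
  shows "bop_R_star_algebra (app -` A)"
proof unfold_locales
  have A: "star_subalgebra A"
    using assms by (simp add: R_star_algebra_def)
  have "app (S + T) = (\<lambda>x. app S x + app T x)" "app (S * T) = app S \<circ> app T"
    "app (scal c * T) = (\<lambda>x. scaleC c (app T x))" for S T :: "'a bop" and c
    by (simp_all add: fun_eq_iff)
  with A show "0 \<in> app -` A"
    "S \<in> app -` A \<Longrightarrow> T \<in> app -` A \<Longrightarrow> S + T \<in> app -` A"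
    "S \<in> app -` A \<Longrightarrow> T \<in> app -` A \<Longrightarrow> S * T \<in> app -` A"
    "T \<in> app -` A \<Longrightarrow> scal c * T \<in> app -` A"
    "T \<in> app -` A \<Longrightarrow> star T \<in> app -` A" for S T c
    by (simp_all add: star_subalgebra_def app_zero_fun app_star)
  show "finite (spectrum h)" if "h \<in> app -` A" "star h = h" for h
  proof -
    have "adj (app h) = app h"
      using that(2) by (simp flip: app_star)
    with assms that(1) have "finite (op_spectrum (app h))"
      by (simp add: R_star_algebra_def)
    then show ?thesis
      by (simp add: op_spectrum_app)
  qed
qed

lemma infinite_orthogonal_iff_preimage:
  assumes bounded: "\<And>T. T \<in> A \<Longrightarrow> bounded_op T"
  shows "(\<exists>P. infinite P \<and> (\<forall>p\<in>P. is_projection A p \<and> p \<noteq> (\<lambda>x. 0)) \<and>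
            (\<forall>p\<in>P. \<forall>q\<in>P. p \<noteq> q \<longrightarrow> p \<circ> q = (\<lambda>x. 0)))
    \<longleftrightarrow> (\<exists>D. infinite D \<and> orthogonal_projections (app -` A) D)"
    (is "(\<exists>P. ?fam P) \<longleftrightarrow> _")
proof
  assume "\<exists>P. ?fam P"
  then obtain P where P: "?fam P" by blast
  have "P \<subseteq> A"
    using P by (auto simp: is_projection_def)
  then have "P \<subseteq> range app"
    using bounded app_Abs_bop by (metis rangeI subset_iff)
  then have "app ` (app -` P) = P"
    by (simp add: image_vimage_eq Int_absorb2)
  then have "infinite (app -` P)"
    using P finite_imageI[of "app -` P" app] by auto
  moreover have "x * y = 0" if "x \<in> app -` P" "y \<in> app -` P" "x \<noteq> y" for x y
  proof -
    have "app x \<noteq> app y"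
      using that(3) by (simp add: app_eq_iff)
    with P that have "app x \<circ> app y = (\<lambda>x. 0)"
      by auto
    then show ?thesis
      by (simp add: app_comp app_eq_zero_iff)
  qed
  then have "orthogonal_projections (app -` A) (app -` P)"
    using P unfolding orthogonal_projections_def pairwise_def
    by (auto simp: is_projection_app app_eq_zero_iff)
  ultimately show "\<exists>D. infinite D \<and> orthogonal_projections (app -` A) D" by blast
next
  assume "\<exists>D. infinite D \<and> orthogonal_projections (app -` A) D"
  then obtain D where D: "infinite D" "orthogonal_projections (app -` A) D" by blast
  have "infinite (app ` D)"
    using D(1) finite_imageD[of app D] by (auto simp: inj_on_def app_eq_iff)
  then have "?fam (app ` D)"
    using D(2) unfolding orthogonal_projections_def pairwise_def
    by (auto simp: is_projection_app app_eq_zero_iff app_comp app_eq_iff)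
  then show "\<exists>P. ?fam P" by blast
qed

lemma strict_chain_iff_preimage:
  assumes bounded: "\<And>T. T \<in> A \<Longrightarrow> bounded_op T"
  shows "(\<exists>p :: nat \<Rightarrow> ('a \<Rightarrow> 'a::{complex_inner,complete_space}).
            (\<forall>n. is_projection A (p n)) \<and> (\<forall>n. proj_less (p n) (p (Suc n))))
    \<longleftrightarrow> (\<exists>s. strict_projection_chain (app -` A) s)"
proof
  assume "\<exists>p :: nat \<Rightarrow> ('a \<Rightarrow> 'a). (\<forall>n. is_projection A (p n)) \<and> (\<forall>n. proj_less (p n) (p (Suc n)))"
  then obtain p :: "nat \<Rightarrow> ('a \<Rightarrow> 'a)" where
    p: "\<And>n. is_projection A (p n)" "\<And>n. proj_less (p n) (p (Suc n))"
    by blast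
  define s where "s n = Abs_bop (p n)" for n
  have ps: "p n = app (s n)" for n
    using p(1)[of n] bounded by (simp add: s_def is_projection_def app_Abs_bop)
  have "strict_projection_chain (app -` A) s"
    using p unfolding strict_projection_chain_def proj_less_def proj_le_def ps
    by (simp add: is_projection_app app_comp app_eq_iff)
  then show "\<exists>s. strict_projection_chain (app -` A) s" by blast
next
  assume "\<exists>s. strict_projection_chain (app -` A) s"
  then obtain s where "strict_projection_chain (app -` A) s" ..
  then have "(\<forall>n. is_projection A (app (s n))) \<and> (\<forall>n. proj_less (app (s n)) (app (s (Suc n))))"
    unfolding strict_projection_chain_def proj_less_def proj_le_def
    by (simp add: is_projection_app app_comp app_eq_iff)
  then show "\<exists>p :: nat \<Rightarrow> ('a \<Rightarrow> 'a). (\<forall>n. is_projection A (p n)) \<and> (\<forall>n. proj_less (p n) (p (Suc n)))"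
    by (intro exI[of _ "\<lambda>n. app (s n)"])
qed

lemma finite_dim_preimage_if_finite_dim_alg:
  assumes bounded: "\<And>T. T \<in> A \<Longrightarrow> bounded_op T" and "finite_dim_alg A"
  shows "finite_dim (app -` A)"
proof -
  obtain B where B: "finite B" "B \<subseteq> A" "\<And>T. T \<in> A \<Longrightarrow> \<exists>c. T = (\<lambda>x. \<Sum>b\<in>B. scaleC (c b) (b x))"
    using assms(2) unfolding finite_dim_alg_def by blast
  have "T \<in> bop_space.span (Abs_bop ` B)" if T: "app T \<in> A" for T
  proof -
    obtain c where c: "app T = (\<lambda>x. \<Sum>b\<in>B. scaleC (c b) (b x))"
      using B(3)[OF T] by blast
    have "T = (\<Sum>b\<in>B. scal (c b) * Abs_bop b)"
    proof (rule bop_eqI)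
      show "app T x = app (\<Sum>b\<in>B. scal (c b) * Abs_bop b) x" for x
        using B(2) bounded by (simp add: c app_sum app_Abs_bop subset_iff)
    qed
    also have "\<dots> \<in> bop_space.span (Abs_bop ` B)"
      by (intro bop_space.span_sum bop_space.span_scale bop_space.span_base) simp
    finally show ?thesis .
  qed
  moreover have "Abs_bop ` B \<subseteq> app -` A"
    using B(2) bounded by (auto simp: app_Abs_bop)
  ultimately show ?thesis
    unfolding finite_dim_def using B(1) by blast
qed

lemma finite_dim_alg_if_finite_dim_preimage:
  assumes bounded: "\<And>T. T \<in> A \<Longrightarrow> bounded_op T" and "finite_dim (app -` A)"
  shows "finite_dim_alg A"
proof -
  obtain BB where BB: "finite BB" "BB \<subseteq> app -` A" "app -` A \<subseteq> bop_space.span BB"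
    using assms(2) unfolding finite_dim_def by blast
  have "\<exists>c. T = (\<lambda>x. \<Sum>b\<in>app ` BB. scaleC (c b) (b x))" if "T \<in> A" for T
  proof -
    have T: "app (Abs_bop T) = T"
      using bounded that by (simp add: app_Abs_bop)
    then have "Abs_bop T \<in> bop_space.span BB"
      using BB(3) that by auto
    then obtain u where u: "Abs_bop T = (\<Sum>v\<in>BB. scal (u v) * v)"
      using bop_space.span_finite[OF BB(1)] by blast
    have "T = (\<lambda>x. \<Sum>v\<in>BB. scaleC (u v) (app v x))"
      using arg_cong[OF u, of app] T by (simp add: app_sum fun_eq_iff)
    also have "\<dots> = (\<lambda>x. \<Sum>b\<in>app ` BB. scaleC (u (Abs_bop b)) (b x))"
      by (simp add: sum.reindex inj_on_def app_eq_iff app_inverse)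
    finally show ?thesis
      by (rule exI[of _ "\<lambda>b. u (Abs_bop b)"])
  qed
  moreover have "finite (app ` BB)" "app ` BB \<subseteq> A"
    using BB(1,2) by auto
  ultimately show ?thesis
    unfolding finite_dim_alg_def by blast
qed

lemma finite_dim_alg_iff_preimage:
  "(\<And>T. T \<in> A \<Longrightarrow> bounded_op T) \<Longrightarrow> finite_dim_alg A \<longleftrightarrow> finite_dim (app -` A)"
  using finite_dim_preimage_if_finite_dim_alg finite_dim_alg_if_finite_dim_preimage by blast

theorem proposition5p9:
  fixes A :: "('h::{complex_inner, complete_space} \<Rightarrow> 'h) set"
  assumes "R_star_algebra A"
  shows "((\<nexists>p :: nat \<Rightarrow> ('h \<Rightarrow> 'h).
             (\<forall>n. is_projection A (p n)) \<and> (\<forall>n. proj_less (p n) (p (Suc n))))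
          \<longleftrightarrow>
          (\<nexists>P. infinite P \<and> (\<forall>p\<in>P. is_projection A p \<and> p \<noteq> (\<lambda>x. 0)) \<and>
             (\<forall>p\<in>P. \<forall>q\<in>P. p \<noteq> q \<longrightarrow> p \<circ> q = (\<lambda>x. 0))))
       \<and>
         ((\<nexists>P. infinite P \<and> (\<forall>p\<in>P. is_projection A p \<and> p \<noteq> (\<lambda>x. 0)) \<and>
             (\<forall>p\<in>P. \<forall>q\<in>P. p \<noteq> q \<longrightarrow> p \<circ> q = (\<lambda>x. 0)))
          \<longleftrightarrow> finite_dim_alg A)"
proof -
  interpret bop_R_star_algebra "app -` A"
    using assms by (rule bop_R_star_algebra_preimage)
  have bounded: "\<And>T. T \<in> A \<Longrightarrow> bounded_op T"
    using assms by (simp add: R_star_algebra_def star_subalgebra_def)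
  have chain: "(\<exists>s. strict_projection_chain (app -` A) s) \<longleftrightarrow>
      (\<exists>D. infinite D \<and> orthogonal_projections (app -` A) D)"
    using strict_chain_if_infinite_orthogonal infinite_orthogonal_if_strict_chain by blast
  have dim: "(\<nexists>D. infinite D \<and> orthogonal_projections (app -` A) D) \<longleftrightarrow> finite_dim (app -` A)"
    using finite_dim_if_no_infinite_orthogonal finite_orthogonal_projections_if_finite_dim by blast
  show ?thesis
    using strict_chain_iff_preimage[OF bounded] infinite_orthogonal_iff_preimage[OF bounded]
      finite_dim_alg_iff_preimage[OF bounded] chain dim
    by (simp only:)
qed

end
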